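(* Let $q=(q_1,q_2,q_3)\in K^3$. Define the linear map $\Gamma_q:\mathcal{H}_{\mathbb{T}}\to\mathbf{WQSym}$ by, for $\mathcal{T}\in\mathbb{T}_n$, $$\Gamma_q(\mathcal{T})=\sum_{f\in\mathcal{P}(\mathcal{T})}q_1^{\ell_1(f)}q_2^{\ell_2(f)}q_3^{\ell_3(f)}\,f(1)\ldots f(n).$$ Then $\Gamma_q$ is a homogeneous surjective Hopf algebra morphism from $(\mathcal{H}_{\mathbb{T}},.,\Delta)$ to $(\mathbf{WQSym},.,\Delta)$. Moreover $j\circ\Gamma_{(q_2,q_1,q_3)}=\Gamma_{(q_1,q_2,q_3)}\circ\iota$.
   Context: Let $K$ be a field; convention $0^0=1$. For $n\geq0$, $[n]=\{1,\ldots,n\}$, $\mathbb{T}_n$ is the set of topologies on $[n]$, $\mathcal{H}_{\mathbb{T}}$ the $K$-vector space with basis $\bigsqcup_n\mathbb{T}_n$, graded by $n$. For a topology $\mathcal{T}$ on finite $X$: $i\leq_{\mathcal{T}}j$ iff every open set containing $i$ contains $j$; $i\sim_{\mathcal{T}}j$ iff $i\leq_{\mathcal{T}}j$ and $j\leq_{\mathcal{T}}i$; $i<_{\mathcal{T}}j$ iff $i\leq_{\mathcal{T}}j$ and not $j\leq_{\mathcal{T}}i$. $\mathcal{T}_{\mid Y}=\{O\cap Y\mid O\in\mathcal{T}\}$; for $X$ totally ordered of size $m$, $\mathrm{Std}(\mathcal{T})\in\mathbb{T}_m$ is the transport along the increasing bijection $X\to[m]$. Product on $\mathcal{H}_{\mathbb{T}}$: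 $\mathcal{T}.\mathcal{T}'$ ($\mathcal{T}\in\mathbb{T}_n,\mathcal{T}'\in\mathbb{T}_{n'}$) is the topology on $[n+n']$ with open sets $O\sqcup\{k+n\mid k\in O'\}$, $O\in\mathcal{T},O'\in\mathcal{T}'$; coproduct $\Delta(\mathcal{T})=\sum_{O\in\mathcal{T}}\mathrm{Std}(\mathcal{T}_{\mid[n]\setminus O})\otimes\mathrm{Std}(\mathcal{T}_{\mid O})$; $\iota(\mathcal{T})=\{X\setminus O\mid O\in\mathcal{T}\}$. $\mathbf{WQSym}$: a packed word of length $n$ is a word $f=f(1)\ldots f(n)$ of positive integers with $\{f(1),\ldots,f(n)\}=[\max f]$ (the empty word has $\max=0$). For a word $w$ of positive integers, $\mathrm{Pack}(w)$ is obtained by applying the unique increasing bijection from its set of letters onto some $[m]$; $w_{\mid I}$ is the subword of letters lying in $I$. $\mathbf{WQSym}$ has basis the packed words, product $f.f'=\sum f''$ over packed words $f''$ of length $n+n'$ with $\mathrm{Pack}(f''(1)\ldots f''(n))=f$ and $\mathrm{Pack}(f''(n+1)\ldots f''(n+n'))=f'$ ($n,n'$ the lengths of $f,f'$), and coproduct $\Delta(f)=\sum_{k=0}^{\max f}f_{\mid[k]}\otimes\mathrm{Pack}(f_{\mid\mathbb{N}_{>0}\setminus[k]})$; it is a graded (by length) Hopf algebra. $j$ is the linear involution sending a packed word $f$ to the word $(\max f+1-f(1))\ldots(\max f+1-f(n))$. A generalized T-partition of $\mathcal{T}\in\mathbb{T}_n$ is a surjection $f:[n]\to[p]$ (some $p\ge0$)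 such that $i\leq_{\mathcal{T}}j\Rightarrow f(i)\leq f(j)$, identified with the packed word $f(1)\ldots f(n)$; $\mathcal{P}(\mathcal{T})$ is their set. For $f\in\mathcal{P}(\mathcal{T})$: $\ell_1(f)=\sharp\{(i,j)\mid i<_{\mathcal{T}}j,\ i<j,\ f(i)=f(j)\}$; $\ell_2(f)=\sharp\{(i,j)\mid i<_{\mathcal{T}}j,\ i>j,\ f(i)=f(j)\}$; $\ell_3(f)=\sharp\{(i,j,k)\mid i<j<k,\ i\sim_{\mathcal{T}}k,\ \text{not } i\sim_{\mathcal{T}}j,\ \text{not } j\sim_{\mathcal{T}}k,\ f(i)=f(j)=f(k)\}$. *)

theory Defs
  imports Main "HOL-Library.Poly_Mapping"
begin

definition pm_smult :: "'k::field \<Rightarrow> ('b \<Rightarrow>\<^sub>0 'k) \<Rightarrow> ('b \<Rightarrow>\<^sub>0 'k)" where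
  "pm_smult c p = Poly_Mapping.map (\<lambda>v. c * v) p"

definition lin_ext :: "('b \<Rightarrow> ('c \<Rightarrow>\<^sub>0 'k::field)) \<Rightarrow> ('b \<Rightarrow>\<^sub>0 'k) \<Rightarrow> ('c \<Rightarrow>\<^sub>0 'k)" where
  "lin_ext g x = (\<Sum>b\<in>Poly_Mapping.keys x. pm_smult (Poly_Mapping.lookup x b) (g b))"

definition bilin_ext :: "('b \<Rightarrow> 'c \<Rightarrow> ('d \<Rightarrow>\<^sub>0 'k::field)) \<Rightarrow> ('b \<Rightarrow>\<^sub>0 'k) \<Rightarrow> ('c \<Rightarrow>\<^sub>0 'k) \<Rightarrow> ('d \<Rightarrow>\<^sub>0 'k)" where
  "bilin_ext m x y = (\<Sum>b\<in>Poly_Mapping.keys x. \<Sum>c\<in>Poly_Mapping.keys y. pm_smult (Poly_Mapping.lookup x b * Poly_Mapping.lookup y c) (m b c))"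

definition tensor_map :: "(('b \<Rightarrow>\<^sub>0 'k::field) \<Rightarrow> ('c \<Rightarrow>\<^sub>0 'k)) \<Rightarrow> (('d \<Rightarrow>\<^sub>0 'k) \<Rightarrow> ('e \<Rightarrow>\<^sub>0 'k))
     \<Rightarrow> (('b \<times> 'd) \<Rightarrow>\<^sub>0 'k) \<Rightarrow> (('c \<times> 'e) \<Rightarrow>\<^sub>0 'k)" where
  "tensor_map F G = lin_ext (\<lambda>(b, d).
      (\<Sum>u\<in>Poly_Mapping.keys (F (Poly_Mapping.single b 1)). \<Sum>v\<in>Poly_Mapping.keys (G (Poly_Mapping.single d 1)).
         Poly_Mapping.single (u, v) (Poly_Mapping.lookup (F (Poly_Mapping.single b 1)) u * Poly_Mapping.lookup (G (Poly_Mapping.single d 1)) v)))"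

definition is_topology :: "nat set \<Rightarrow> nat set set \<Rightarrow> bool" where
  "is_topology X T \<longleftrightarrow> T \<subseteq> Pow X \<and> {} \<in> T \<and> X \<in> T \<and>
     (\<forall>A\<in>T. \<forall>B\<in>T. A \<union> B \<in> T \<and> A \<inter> B \<in> T)"

definition topologies :: "nat \<Rightarrow> nat set set set" where
  "topologies n = {T. is_topology {1..n} T}"

definition all_topologies :: "nat set set set" where
  "all_topologies = (\<Union>n. topologies n)"

definition tdeg :: "nat set set \<Rightarrow> nat" where
  "tdeg T = card (\<Union>T)"

definition tleq :: "nat set set \<Rightarrow> nat \<Rightarrow> nat \<Rightarrow> bool" where
  "tleq T i j \<longleftrightarrow> (\<forall>U\<in>T. i \<in> U \<longrightarrow> j \<in> U)"

definition tsim :: "nat set set \<Rightarrow> nat \<Rightarrow> nat \<Rightarrow> bool" where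
  "tsim T i j \<longleftrightarrow> tleq T i j \<and> tleq T j i"

definition tless :: "nat set set \<Rightarrow> nat \<Rightarrow> nat \<Rightarrow> bool" where
  "tless T i j \<longleftrightarrow> tleq T i j \<and> \<not> tleq T j i"

definition restr :: "nat set set \<Rightarrow> nat set \<Rightarrow> nat set set" where
  "restr T Y = (\<lambda>U. U \<inter> Y) ` T"

text \<open>the increasing bijection from a finite X \<subseteq> \<nat> onto [card X]\<close>
definition std_map :: "nat set \<Rightarrow> nat \<Rightarrow> nat" where
  "std_map X i = card {x \<in> X. x \<le> i}"

definition std :: "nat set \<Rightarrow> nat set set \<Rightarrow> nat set set" where
  "std X T = (\<lambda>U. std_map X ` U) ` T"

definition topo_prod :: "nat set set \<Rightarrow> nat set set \<Rightarrow> nat set set" where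
  "topo_prod T T' = {U \<union> (\<lambda>k. k + tdeg T) ` U' | U U'. U \<in> T \<and> U' \<in> T'}"

definition topo_iota :: "nat set set \<Rightarrow> nat set set" where
  "topo_iota T = {{1..tdeg T} - U | U. U \<in> T}"

definition topo_delta :: "nat set set \<Rightarrow> (nat set set \<times> nat set set) \<Rightarrow>\<^sub>0 'k::field" where
  "topo_delta T = (\<Sum>U\<in>T. Poly_Mapping.single
      (std ({1..tdeg T} - U) (restr T ({1..tdeg T} - U)), std U (restr T U)) 1)"

definition HT_mult :: "(nat set set \<Rightarrow>\<^sub>0 'k::field) \<Rightarrow> (nat set set \<Rightarrow>\<^sub>0 'k) \<Rightarrow> (nat set set \<Rightarrow>\<^sub>0 'k)" where
  "HT_mult = bilin_ext (\<lambda>T T'. Poly_Mapping.single (topo_prod T T') 1)"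

definition HT_unit :: "nat set set \<Rightarrow>\<^sub>0 'k::field" where
  "HT_unit = Poly_Mapping.single {{}} 1"

definition HT_delta :: "(nat set set \<Rightarrow>\<^sub>0 'k::field) \<Rightarrow> ((nat set set \<times> nat set set) \<Rightarrow>\<^sub>0 'k)" where
  "HT_delta = lin_ext topo_delta"

definition HT_counit :: "(nat set set \<Rightarrow>\<^sub>0 'k::field) \<Rightarrow> 'k" where
  "HT_counit x = Poly_Mapping.lookup x {{}}"

definition HT_iota :: "(nat set set \<Rightarrow>\<^sub>0 'k::field) \<Rightarrow> (nat set set \<Rightarrow>\<^sub>0 'k)" where
  "HT_iota = lin_ext (\<lambda>T. Poly_Mapping.single (topo_iota T) 1)"

definition packed :: "nat list \<Rightarrow> bool" where
  "packed w \<longleftrightarrow> (\<exists>m. set w = {1..m})"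

definition wmax :: "nat list \<Rightarrow> nat" where
  "wmax w = (if w = [] then 0 else Max (set w))"

definition pack :: "nat list \<Rightarrow> nat list" where
  "pack w = map (std_map (set w)) w"

definition wq_prod :: "nat list \<Rightarrow> nat list \<Rightarrow> nat list \<Rightarrow>\<^sub>0 'k::field" where
  "wq_prod f g = (\<Sum>w\<in>{w. packed w \<and> length w = length f + length g \<and>
        pack (take (length f) w) = f \<and> pack (drop (length f) w) = g}. Poly_Mapping.single w 1)"

definition wq_delta :: "nat list \<Rightarrow> (nat list \<times> nat list) \<Rightarrow>\<^sub>0 'k::field" where
  "wq_delta f = (\<Sum>k\<in>{0..wmax f}. Poly_Mapping.single
      (filter (\<lambda>x. x \<in> {1..k}) f, pack (filter (\<lambda>x. x \<notin> {1..k}) f)) 1)"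

definition wq_j :: "nat list \<Rightarrow> nat list" where
  "wq_j f = map (\<lambda>x. wmax f + 1 - x) f"

definition WQ_mult :: "(nat list \<Rightarrow>\<^sub>0 'k::field) \<Rightarrow> (nat list \<Rightarrow>\<^sub>0 'k) \<Rightarrow> (nat list \<Rightarrow>\<^sub>0 'k)" where
  "WQ_mult = bilin_ext wq_prod"

definition WQ_unit :: "nat list \<Rightarrow>\<^sub>0 'k::field" where
  "WQ_unit = Poly_Mapping.single [] 1"

definition WQ_delta :: "(nat list \<Rightarrow>\<^sub>0 'k::field) \<Rightarrow> ((nat list \<times> nat list) \<Rightarrow>\<^sub>0 'k)" where
  "WQ_delta = lin_ext wq_delta"

definition WQ_counit :: "(nat list \<Rightarrow>\<^sub>0 'k::field) \<Rightarrow> 'k" where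
  "WQ_counit x = Poly_Mapping.lookup x []"

definition WQ_j :: "(nat list \<Rightarrow>\<^sub>0 'k::field) \<Rightarrow> (nat list \<Rightarrow>\<^sub>0 'k)" where
  "WQ_j = lin_ext (\<lambda>f. Poly_Mapping.single (wq_j f) 1)"

text \<open>letter f(i) of a word, 1-based\<close>
definition wat :: "nat list \<Rightarrow> nat \<Rightarrow> nat" where
  "wat w i = w ! (i - 1)"

definition Tpartitions :: "nat set set \<Rightarrow> nat list set" where
  "Tpartitions T = {w. packed w \<and> length w = tdeg T \<and>
     (\<forall>i\<in>{1..tdeg T}. \<forall>j\<in>{1..tdeg T}. tleq T i j \<longrightarrow> wat w i \<le> wat w j)}"

definition ell1 :: "nat set set \<Rightarrow> nat list \<Rightarrow> nat" where
  "ell1 T f = card {(i, j). i \<in> {1..tdeg T} \<and> j \<in> {1..tdeg T} \<and>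
      tless T i j \<and> i < j \<and> wat f i = wat f j}"

definition ell2 :: "nat set set \<Rightarrow> nat list \<Rightarrow> nat" where
  "ell2 T f = card {(i, j). i \<in> {1..tdeg T} \<and> j \<in> {1..tdeg T} \<and>
      tless T i j \<and> i > j \<and> wat f i = wat f j}"

definition ell3 :: "nat set set \<Rightarrow> nat list \<Rightarrow> nat" where
  "ell3 T f = card {(i, j, k). i \<in> {1..tdeg T} \<and> j \<in> {1..tdeg T} \<and> k \<in> {1..tdeg T} \<and>
      i < j \<and> j < k \<and> tsim T i k \<and> \<not> tsim T i j \<and> \<not> tsim T j k \<and>
      wat f i = wat f j \<and> wat f j = wat f k}"

definition gamma_basis :: "'k::field \<Rightarrow> 'k \<Rightarrow> 'k \<Rightarrow> nat set set \<Rightarrow> nat list \<Rightarrow>\<^sub>0 'k" where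
  "gamma_basis q1 q2 q3 T = (\<Sum>f\<in>Tpartitions T.
      Poly_Mapping.single f (q1 ^ ell1 T f * q2 ^ ell2 T f * q3 ^ ell3 T f))"

definition Gamma :: "'k::field \<Rightarrow> 'k \<Rightarrow> 'k \<Rightarrow> (nat set set \<Rightarrow>\<^sub>0 'k) \<Rightarrow> (nat list \<Rightarrow>\<^sub>0 'k)" where
  "Gamma q1 q2 q3 = lin_ext (gamma_basis q1 q2 q3)"

end

theory Submission
  imports Defs
begin

text \<open>
  The coefficient of a packed word \<open>f\<close> in \<open>\<Gamma>\<^sub>q(T)\<close> is a weight depending only on the
  specialisation preorder of \<open>T\<close> and on which positions \<open>f\<close> colours alike, and it is invariant
  under order-preserving relabelling of positions. Multiplicativity: a word is a partition of
  \<open>T.T'\<close> iff its standardised prefix and suffix are partitions of \<open>T\<close> and \<open>T'\<close>, and no tie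
  crosses the two blocks, which are incomparable. Comultiplicativity: cutting a partition \<open>f\<close>
  at a level \<open>k\<close> yields the open set \<open>{i. k < f(i)}\<close> together with partitions of the two
  induced topologies, and merging is inverse to cutting; ties never cross the cut since the two
  parts use disjoint letters. The identity for \<open>\<iota>\<close> holds because \<open>j\<close> reverses the letters
  while \<open>\<iota>\<close> reverses the preorder, which exchanges \<open>\<ell>\<^sub>1\<close> and \<open>\<ell>\<^sub>2\<close>. Surjectivity is
  unitriangularity: for the topology whose open sets are the upper level sets of \<open>w\<close>, the word
  \<open>w\<close> is a partition of weight 1, and every other partition is letterwise smaller than \<open>w\<close>.
\<close>

section \<open>Linear extensions\<close>

lemma lookup_pm_smult [simp]: "Poly_Mapping.lookup (pm_smult c p) k = c * Poly_Mapping.lookup p k"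
  by (simp add: pm_smult_def map.rep_eq when_def)

lemma pm_smult_1 [simp]: "pm_smult 1 p = p"
  by (rule poly_mapping_eqI) simp

lemma pm_smult_single: "pm_smult c (Poly_Mapping.single b 1) = Poly_Mapping.single b c"
  by (rule poly_mapping_eqI) (simp add: lookup_single when_def)

lemma keys_pm_smult: "Poly_Mapping.keys (pm_smult c p) \<subseteq> Poly_Mapping.keys p"
  by (auto simp: in_keys_iff)

lemma lookup_lin_ext:
  "Poly_Mapping.lookup (lin_ext g x) w =
     (\<Sum>b\<in>Poly_Mapping.keys x. Poly_Mapping.lookup x b * Poly_Mapping.lookup (g b) w)"
  by (simp add: lin_ext_def lookup_sum)

lemma lookup_lin_ext_superset:
  assumes "finite S" "Poly_Mapping.keys x \<subseteq> S"
  shows "Poly_Mapping.lookup (lin_ext g x) w =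
           (\<Sum>b\<in>S. Poly_Mapping.lookup x b * Poly_Mapping.lookup (g b) w)"
  unfolding lookup_lin_ext
  by (rule sum.mono_neutral_left) (use assms in \<open>auto simp: in_keys_iff\<close>)

lemma keys_lin_ext:
  "Poly_Mapping.keys (lin_ext g x) \<subseteq> (\<Union>b\<in>Poly_Mapping.keys x. Poly_Mapping.keys (g b))"
proof
  fix w assume w: "w \<in> Poly_Mapping.keys (lin_ext g x)"
  show "w \<in> (\<Union>b\<in>Poly_Mapping.keys x. Poly_Mapping.keys (g b))"
  proof (rule ccontr)
    assume "\<not> ?thesis"
    then have "Poly_Mapping.lookup (lin_ext g x) w = 0" by (auto simp: in_keys_iff lookup_lin_ext)
    with w show False by (simp add: in_keys_iff)
  qed
qed

lemma lin_ext_cong: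
  "(\<And>b. b \<in> Poly_Mapping.keys x \<Longrightarrow> g b = g' b) \<Longrightarrow> lin_ext g x = lin_ext g' x"
  by (simp add: lin_ext_def)

lemma lin_ext_lin_ext: "lin_ext g (lin_ext h x) = lin_ext (\<lambda>b. lin_ext g (h b)) x"
proof (rule poly_mapping_eqI)
  fix w
  define S where "S = (\<Union>b\<in>Poly_Mapping.keys x. Poly_Mapping.keys (h b))"
  have S: "finite S" by (simp add: S_def)
  have "Poly_Mapping.lookup (lin_ext g (lin_ext h x)) w =
      (\<Sum>u\<in>S. Poly_Mapping.lookup (lin_ext h x) u * Poly_Mapping.lookup (g u) w)"
    by (rule lookup_lin_ext_superset[OF S]) (simp add: S_def keys_lin_ext)
  also have "\<dots> = (\<Sum>b\<in>Poly_Mapping.keys x. Poly_Mapping.lookup x b *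
      (\<Sum>u\<in>S. Poly_Mapping.lookup (h b) u * Poly_Mapping.lookup (g u) w))"
    by (simp add: lookup_lin_ext sum_distrib_left sum_distrib_right mult.assoc sum.swap[of _ S])
  also have "\<dots> = (\<Sum>b\<in>Poly_Mapping.keys x.
      Poly_Mapping.lookup x b * Poly_Mapping.lookup (lin_ext g (h b)) w)"
    by (rule sum.cong[OF refl], subst lookup_lin_ext_superset[OF S]) (auto simp: S_def)
  finally show "Poly_Mapping.lookup (lin_ext g (lin_ext h x)) w =
      Poly_Mapping.lookup (lin_ext (\<lambda>b. lin_ext g (h b)) x) w"
    by (simp add: lookup_lin_ext)
qed

lemma lin_ext_single: "lin_ext g (Poly_Mapping.single b c) = pm_smult c (g b)"
  by (rule poly_mapping_eqI, subst lookup_lin_ext_superset[of "{b}"]) auto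

lemma lin_ext_single_1 [simp]: "lin_ext g (Poly_Mapping.single b 1) = g b"
  by (simp add: lin_ext_single)

lemma lin_ext_zero [simp]: "lin_ext g 0 = 0"
  by (simp add: lin_ext_def)

lemma lin_ext_add: "lin_ext g (x + y) = lin_ext g x + lin_ext g y"
proof (rule poly_mapping_eqI)
  fix w
  define S where "S = Poly_Mapping.keys x \<union> Poly_Mapping.keys y"
  have S: "finite S" "Poly_Mapping.keys (x + y) \<subseteq> S"
    using keys_add[of x y] by (auto simp: S_def)
  show "Poly_Mapping.lookup (lin_ext g (x + y)) w = Poly_Mapping.lookup (lin_ext g x + lin_ext g y) w"
    by (simp add: lookup_add lookup_lin_ext_superset[OF S] lookup_lin_ext_superset[OF S(1), of x]
        lookup_lin_ext_superset[OF S(1), of y] S_def distrib_right sum.distrib)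
qed

lemma lin_ext_diff: "lin_ext g (x - y) = lin_ext g x - lin_ext g y"
  by (metis add_diff_cancel lin_ext_add diff_add_cancel)

lemma lin_ext_sum: "lin_ext g (\<Sum>i\<in>I. f i) = (\<Sum>i\<in>I. lin_ext g (f i))"
  by (induction I rule: infinite_finite_induct) (simp_all add: lin_ext_add)

lemma lin_ext_pm_smult: "lin_ext g (pm_smult c x) = pm_smult c (lin_ext g x)"
  by (rule poly_mapping_eqI, subst lookup_lin_ext_superset[OF _ keys_pm_smult])
     (simp_all add: lookup_lin_ext sum_distrib_left mult.assoc)

lemma lin_ext_commute:
  "lin_ext (\<lambda>b. lin_ext (\<lambda>c. F b c) y) x = lin_ext (\<lambda>c. lin_ext (\<lambda>b. F b c) x) y"
  by (rule poly_mapping_eqI)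
     (simp add: lookup_lin_ext sum_distrib_left sum_distrib_right mult_ac sum.swap[of _ "Poly_Mapping.keys x"])

lemma bilin_ext_eq_lin_ext: "bilin_ext m x y = lin_ext (\<lambda>b. lin_ext (m b) y) x"
  by (rule poly_mapping_eqI) (simp add: bilin_ext_def lin_ext_def lookup_sum sum_distrib_left mult_ac)

lemma lookup_tensor_map_single:
  "Poly_Mapping.lookup (tensor_map F G (Poly_Mapping.single (b, d) 1)) (u, v) =
     Poly_Mapping.lookup (F (Poly_Mapping.single b 1)) u * Poly_Mapping.lookup (G (Poly_Mapping.single d 1)) v"
proof -
  let ?a = "F (Poly_Mapping.single b 1)" and ?b = "G (Poly_Mapping.single d 1)"
  have "Poly_Mapping.lookup (tensor_map F G (Poly_Mapping.single (b, d) 1)) (u, v) =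
    (\<Sum>p\<in>Poly_Mapping.keys ?a \<times> Poly_Mapping.keys ?b.
        if p = (u, v) then Poly_Mapping.lookup ?a (fst p) * Poly_Mapping.lookup ?b (snd p) else 0)"
    unfolding tensor_map_def lin_ext_single_1 prod.case lookup_sum sum.cartesian_product
    by (intro sum.cong refl) (auto simp: lookup_single when_def split: if_splits)
  also have "\<dots> = Poly_Mapping.lookup ?a u * Poly_Mapping.lookup ?b v"
    by (subst sum.delta) (auto simp: in_keys_iff)
  finally show ?thesis .
qed

section \<open>Standardisation, packing and letters of words\<close>

lemma std_map_mono: "finite X \<Longrightarrow> a \<le> b \<Longrightarrow> std_map X a \<le> std_map X b"
  unfolding std_map_def by (rule card_mono) auto

lemma std_map_strict_mono:
  assumes "finite X" "b \<in> X" "a < b"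
  shows "std_map X a < std_map X b"
proof -
  have "{x \<in> X. x \<le> a} \<subseteq> {x \<in> X. x \<le> b}" "b \<in> {x \<in> X. x \<le> b} - {x \<in> X. x \<le> a}"
    using assms by auto
  then have "{x \<in> X. x \<le> a} \<subset> {x \<in> X. x \<le> b}" by blast
  then show ?thesis unfolding std_map_def using assms(1) by (intro psubset_card_mono) auto
qed

lemma std_map_less_iff: "finite X \<Longrightarrow> b \<in> X \<Longrightarrow> std_map X a < std_map X b \<longleftrightarrow> a < b"
  by (metis std_map_strict_mono std_map_mono not_less)

lemma std_map_le_iff: "finite X \<Longrightarrow> a \<in> X \<Longrightarrow> std_map X a \<le> std_map X b \<longleftrightarrow> a \<le> b"
  by (metis std_map_strict_mono std_map_mono not_less)

lemma std_map_eq_iff: "finite X \<Longrightarrow> a \<in> X \<Longrightarrow> b \<in> X \<Longrightarrow> std_map X a = std_map X b \<longleftrightarrow> a = b"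
  by (metis std_map_le_iff order.antisym order_refl)

lemma inj_on_std_map: "finite X \<Longrightarrow> inj_on (std_map X) X"
  by (auto simp: inj_on_def std_map_eq_iff)

lemma std_map_in_range: "finite X \<Longrightarrow> a \<in> X \<Longrightarrow> std_map X a \<in> {1..card X}"
proof -
  assume f: "finite X" and a: "a \<in> X"
  have "{x \<in> X. x \<le> a} \<noteq> {}" using a by auto
  then have "1 \<le> std_map X a" unfolding std_map_def using f by (simp add: Suc_leI card_gt_0_iff)
  moreover have "std_map X a \<le> card X" unfolding std_map_def using f by (intro card_mono) auto
  ultimately show ?thesis by simp
qed

lemma std_map_image: "finite X \<Longrightarrow> std_map X ` X = {1..card X}"
proof -
  assume f: "finite X"
  have "std_map X ` X \<subseteq> {1..card X}" "card (std_map X ` X) = card X"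
    using std_map_in_range[OF f] card_image[OF inj_on_std_map[OF f]] by auto
  then show ?thesis by (metis card_atLeastAtMost card_subset_eq diff_Suc_1 finite_atLeastAtMost)
qed

lemma std_map_atLeastAtMost: "x \<in> {Suc k..m} \<Longrightarrow> std_map {Suc k..m} x = x - k"
proof -
  assume "x \<in> {Suc k..m}"
  then have "{y \<in> {Suc k..m}. y \<le> x} = {Suc k..x}" by auto
  then show ?thesis by (simp add: std_map_def)
qed

lemma wmax_eqI: "set w = {1..m} \<Longrightarrow> wmax w = m"
proof (cases "m = 0")
  case False
  assume s: "set w = {1..m}"
  then have "w \<noteq> []" using False by auto
  moreover have "Max {1..m} = m" using False by (intro Max_eqI) auto
  ultimately show ?thesis using s by (simp add: wmax_def)
qed (simp add: wmax_def)

lemma packed_iff: "packed w \<longleftrightarrow> set w = {1..wmax w}"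
  using wmax_eqI packed_def by metis

lemma set_packed: "packed w \<Longrightarrow> set w = {1..wmax w}"
  by (simp add: packed_iff)

lemma wmax_cong: "set f = set g \<Longrightarrow> wmax f = wmax g"
  by (auto simp: wmax_def)

lemma finite_packed_length: "finite {w. packed w \<and> length w = m}"
proof (rule finite_subset)
  show "{w. packed w \<and> length w = m} \<subseteq> {w. set w \<subseteq> {0..m} \<and> length w = m}"
  proof safe
    fix w x assume "packed w" "x \<in> set w"
    moreover from \<open>packed w\<close> have "wmax w = card (set w)"
      by (metis set_packed card_atLeastAtMost diff_Suc_1)
    ultimately show "x \<in> {0..length w}"
      using card_length[of w] by (auto simp: packed_iff)
        (metis atLeastAtMost_iff le_trans)
  qed
qed (rule finite_lists_length_eq, simp)

lemma length_pack [simp]: "length (pack w) = length w"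
  by (simp add: pack_def)

lemma set_pack: "set (pack w) = {1..card (set w)}"
  by (simp add: pack_def std_map_image)

lemma packed_pack: "packed (pack w)"
  by (auto simp: packed_def set_pack)

lemma pack_packed: "packed w \<Longrightarrow> pack w = w"
  unfolding pack_def using std_map_atLeastAtMost[of _ 0 "wmax w"]
  by (intro map_idI) (simp add: set_packed)

lemma pack_map_add: "pack (map (\<lambda>x. x + k) w) = pack w"
proof -
  have "{y \<in> (\<lambda>x. x + k) ` set w. y \<le> x + k} = (\<lambda>x. x + k) ` {y \<in> set w. y \<le> x}" for x
    by auto
  then show ?thesis by (simp add: pack_def std_map_def card_image)
qed

lemma wat_in_set: "i \<in> {1..length w} \<Longrightarrow> wat w i \<in> set w"
  by (auto simp: wat_def)

lemma set_eq_wat_image: "set w = wat w ` {1..length w}"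
proof
  show "set w \<subseteq> wat w ` {1..length w}"
  proof
    fix x assume "x \<in> set w"
    then obtain p where "p < length w" "w ! p = x" by (auto simp: in_set_conv_nth)
    then show "x \<in> wat w ` {1..length w}" by (intro image_eqI[of x _ "Suc p"]) (auto simp: wat_def)
  qed
qed (use wat_in_set in blast)

lemma packed_wat_bounds: "packed w \<Longrightarrow> i \<in> {1..length w} \<Longrightarrow> 1 \<le> wat w i \<and> wat w i \<le> wmax w"
  using wat_in_set[of i w] set_packed[of w] by auto

lemma list_eq_iff_wat:
  assumes "length u = length v" "\<And>i. i \<in> {1..length u} \<Longrightarrow> wat u i = wat v i"
  shows "u = v"
proof (rule nth_equalityI)
  fix i assume "i < length u"
  then show "u ! i = v ! i" using assms(2)[of "Suc i"] by (simp add: wat_def)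
qed (fact assms(1))

lemma wat_pack: "i \<in> {1..length u} \<Longrightarrow> wat (pack u) i = std_map (set u) (wat u i)"
proof -
  assume "i \<in> {1..length u}"
  then have "i - 1 < length u" by auto
  then show ?thesis by (simp add: wat_def pack_def)
qed

lemma wat_pack_le_iff:
  "i \<in> {1..length u} \<Longrightarrow> j \<in> {1..length u} \<Longrightarrow> wat (pack u) i \<le> wat (pack u) j \<longleftrightarrow> wat u i \<le> wat u j"
  by (simp add: wat_pack std_map_le_iff wat_in_set)

lemma wat_pack_eq_iff:
  "i \<in> {1..length u} \<Longrightarrow> j \<in> {1..length u} \<Longrightarrow> wat (pack u) i = wat (pack u) j \<longleftrightarrow> wat u i = wat u j"
  by (simp add: wat_pack std_map_eq_iff wat_in_set)

lemma wat_take: "i \<in> {1..n} \<Longrightarrow> wat (take n w) i = wat w i"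
proof -
  assume "i \<in> {1..n}"
  then have "i - 1 < n" by auto
  then show ?thesis by (simp add: wat_def)
qed

lemma wat_drop: "n \<le> length w \<Longrightarrow> i \<in> {1..length w - n} \<Longrightarrow> wat (drop n w) i = wat w (i + n)"
  by (simp add: wat_def add.commute)

lemma length_filter_eq_card: "length (filter P w) = card {i \<in> {1..length w}. P (wat w i)}"
proof -
  have "{i \<in> {1..length w}. P (wat w i)} = Suc ` {i. i < length w \<and> P (w ! i)}"
  proof (intro equalityI subsetI)
    fix i assume "i \<in> {i \<in> {1..length w}. P (wat w i)}"
    then show "i \<in> Suc ` {i. i < length w \<and> P (w ! i)}"
      by (intro image_eqI[of i _ "i - 1"]) (auto simp: wat_def)
  qed (auto simp: wat_def)
  then show ?thesis
    by (simp add: length_filter_conv_card card_image)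
qed

lemma wat_filter:
  assumes i: "i \<in> {1..length w}" and P: "P (wat w i)"
  shows "wat (filter P w) (std_map {j \<in> {1..length w}. P (wat w j)} i) = wat w i"
proof -
  have i': "i - 1 < length w" "Suc (i - 1) = i"
    using i by auto
  have "{j \<in> {j \<in> {1..length w}. P (wat w j)}. j \<le> i} = {j \<in> {1..length (take i w)}. P (wat (take i w) j)}"
    using i by (auto simp: wat_take)
  then have "std_map {j \<in> {1..length w}. P (wat w j)} i = length (filter P (take i w))"
    by (simp add: std_map_def length_filter_eq_card)
  also have "take i w = take (i - 1) w @ [wat w i]"
    using take_Suc_conv_app_nth[OF i'(1), unfolded i'(2)] by (simp add: wat_def)
  finally have "std_map {j \<in> {1..length w}. P (wat w j)} i = Suc (length (filter P (take (i - 1) w)))"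
    using P by simp
  moreover have "w = take (i - 1) w @ wat w i # drop i w"
    using id_take_nth_drop[OF i'(1)] unfolding i'(2) wat_def .
  then have "filter P w = filter P (take (i - 1) w) @ wat w i # filter P (drop i w)"
    using P by (metis filter.simps(2) filter_append)
  ultimately show ?thesis
    by (simp add: wat_def nth_append)
qed

lemma filter_wat:
  "length (filter P w) = card {i \<in> {1..length w}. P (wat w i)} \<and>
   (\<forall>i\<in>{i \<in> {1..length w}. P (wat w i)}.
      wat (filter P w) (std_map {i \<in> {1..length w}. P (wat w i)} i) = wat w i)"
  using length_filter_eq_card wat_filter by blast

section \<open>Finite topologies\<close>

lemma topologiesD:
  assumes "T \<in> topologies n"
  shows "T \<subseteq> Pow {1..n}" "{} \<in> T" "{1..n} \<in> T"
    "\<And>A B. A \<in> T \<Longrightarrow> B \<in> T \<Longrightarrow> A \<union> B \<in> T" "\<And>A B. A \<in> T \<Longrightarrow> B \<in> T \<Longrightarrow> A \<inter> B \<in> T"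
  using assms by (auto simp: topologies_def is_topology_def)

lemma tdeg_topology: "T \<in> topologies n \<Longrightarrow> tdeg T = n"
proof -
  assume "T \<in> topologies n"
  then have "\<Union>T = {1..n}" using topologiesD(1,3)[of T n] by blast
  then show ?thesis by (simp add: tdeg_def)
qed

lemma finite_topology: "T \<in> topologies n \<Longrightarrow> finite T"
  using topologiesD(1) by (metis finite_Pow_iff finite_atLeastAtMost finite_subset)

lemma topologies_0: "T \<in> topologies 0 \<Longrightarrow> T = {{}}"
  using topologiesD(1,2)[of T 0] by auto

lemma topology_Union_closed:
  assumes "T \<in> topologies n" "finite F" "F \<subseteq> T"
  shows "\<Union>F \<in> T"
  using assms(2,3) by (induction F rule: finite_induct) (auto intro: topologiesD[OF assms(1)])

lemma topology_Inter_closed: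
  assumes "T \<in> topologies n" "finite F" "F \<noteq> {}" "F \<subseteq> T"
  shows "\<Inter>F \<in> T"
  using assms(2-4) by (induction F rule: finite_ne_induct) (auto intro: topologiesD[OF assms(1)])

text \<open>Every up-set of the specialisation preorder is open: it is the union of the minimal
  neighbourhoods of its points.\<close>

lemma up_closed_open:
  assumes T: "T \<in> topologies n" and V: "V \<subseteq> {1..n}"
    and up: "\<And>i j. i \<in> V \<Longrightarrow> j \<in> {1..n} \<Longrightarrow> tleq T i j \<Longrightarrow> j \<in> V"
  shows "V \<in> T"
proof -
  define N where "N i = \<Inter>{U \<in> T. i \<in> U}" for i
  have "N i \<in> T" if "i \<in> V" for i
    unfolding N_def using that V topologiesD(3)[OF T] finite_topology[OF T]
    by (intro topology_Inter_closed[OF T]) auto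
  moreover have "N i \<subseteq> V" if "i \<in> V" for i
  proof
    fix j assume "j \<in> N i"
    then have "j \<in> {1..n}" "tleq T i j"
      using that V topologiesD(3)[OF T] by (auto simp: N_def tleq_def)
    then show "j \<in> V" using up that by blast
  qed
  moreover have "i \<in> N i" for i
    by (auto simp: N_def)
  ultimately have "V = \<Union>(N ` V)" "N ` V \<subseteq> T"
    by blast+
  then show ?thesis
    using V by (metis topology_Union_closed[OF T] finite_atLeastAtMost finite_subset finite_imageI)
qed

section \<open>Weights of coloured preorders\<close>

text \<open>The statistics \<open>\<ell>\<^sub>1, \<ell>\<^sub>2, \<ell>\<^sub>3\<close> for an arbitrary preorder \<open>le\<close> on positions and colouring \<open>F\<close>;
  \<open>\<ell>\<^sub>2\<close> is \<open>\<ell>\<^sub>1\<close> of the converse preorder, which makes the symmetry under \<open>\<iota>\<close> immediate.\<close>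

definition ascending_ties :: "(nat \<Rightarrow> nat \<Rightarrow> bool) \<Rightarrow> (nat \<Rightarrow> nat) \<Rightarrow> nat set \<Rightarrow> (nat \<times> nat) set" where
  "ascending_ties le F X = {(i, j). i \<in> X \<and> j \<in> X \<and> i < j \<and> le i j \<and> \<not> le j i \<and> F i = F j}"

definition interleaved_ties :: "(nat \<Rightarrow> nat \<Rightarrow> bool) \<Rightarrow> (nat \<Rightarrow> nat) \<Rightarrow> nat set \<Rightarrow> (nat \<times> nat \<times> nat) set" where
  "interleaved_ties le F X = {(i, j, k). i \<in> X \<and> j \<in> X \<and> k \<in> X \<and> i < j \<and> j < k \<and> le i k \<and> le k i \<and>
     \<not> (le i j \<and> le j i) \<and> \<not> (le j k \<and> le k j) \<and> F i = F j \<and> F j = F k}"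

definition weight :: "'k::comm_monoid_mult \<Rightarrow> 'k \<Rightarrow> 'k \<Rightarrow> (nat \<Rightarrow> nat \<Rightarrow> bool) \<Rightarrow> (nat \<Rightarrow> nat) \<Rightarrow> nat set \<Rightarrow> 'k" where
  "weight q1 q2 q3 le F X = q1 ^ card (ascending_ties le F X) *
     q2 ^ card (ascending_ties (\<lambda>i j. le j i) F X) * q3 ^ card (interleaved_ties le F X)"

lemma finite_ascending_ties: "finite X \<Longrightarrow> finite (ascending_ties le F X)"
  by (rule finite_subset[of _ "X \<times> X"]) (auto simp: ascending_ties_def)

lemma finite_interleaved_ties: "finite X \<Longrightarrow> finite (interleaved_ties le F X)"
  by (rule finite_subset[of _ "X \<times> X \<times> X"]) (auto simp: interleaved_ties_def)

lemma weight_converse: "weight q1 q2 q3 (\<lambda>i j. le j i) F X = weight q2 q1 q3 le F X"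
proof -
  have "interleaved_ties (\<lambda>i j. le j i) F X = interleaved_ties le F X"
    by (auto simp: interleaved_ties_def)
  then show ?thesis by (simp add: weight_def mult_ac)
qed

lemma weight_eq_1:
  assumes "\<And>i j. i \<in> X \<Longrightarrow> j \<in> X \<Longrightarrow> F i = F j \<Longrightarrow> le i j"
  shows "weight q1 q2 q3 le F X = 1"
proof -
  have "ascending_ties le F X = {}" "ascending_ties (\<lambda>i j. le j i) F X = {}" "interleaved_ties le F X = {}"
    using assms by (auto simp: ascending_ties_def interleaved_ties_def)
  then show ?thesis by (simp add: weight_def)
qed

lemma weight_empty [simp]: "weight q1 q2 q3 le F {} = 1"
  by (rule weight_eq_1) simp

lemma weight_relabel:
  assumes mono: "\<And>a b. a \<in> X \<Longrightarrow> b \<in> X \<Longrightarrow> \<sigma> a < \<sigma> b \<longleftrightarrow> a < b"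
    and img: "\<sigma> ` X = Y"
    and rel: "\<And>a b. a \<in> X \<Longrightarrow> b \<in> X \<Longrightarrow> le' (\<sigma> a) (\<sigma> b) \<longleftrightarrow> le a b"
    and col: "\<And>a b. a \<in> X \<Longrightarrow> b \<in> X \<Longrightarrow> F' (\<sigma> a) = F' (\<sigma> b) \<longleftrightarrow> F a = F b"
  shows "weight q1 q2 q3 le' F' Y = weight q1 q2 q3 le F X"
proof -
  have inj: "inj_on \<sigma> X"
    by (rule inj_onI) (metis mono linorder_neqE_nat order_less_irrefl)
  have pairs: "ascending_ties r' F' Y = map_prod \<sigma> \<sigma> ` ascending_ties r F X"
    if "\<And>a b. a \<in> X \<Longrightarrow> b \<in> X \<Longrightarrow> r' (\<sigma> a) (\<sigma> b) \<longleftrightarrow> r a b" for r r'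
    unfolding ascending_ties_def using img mono that col by (auto simp: image_iff)
  have triples: "interleaved_ties le' F' Y = map_prod \<sigma> (map_prod \<sigma> \<sigma>) ` interleaved_ties le F X"
  proof
    show "interleaved_ties le' F' Y \<subseteq> map_prod \<sigma> (map_prod \<sigma> \<sigma>) ` interleaved_ties le F X"
    proof clarify
      fix x y z assume "(x, y, z) \<in> interleaved_ties le' F' Y"
      moreover obtain a b c where "a \<in> X" "b \<in> X" "c \<in> X" "x = \<sigma> a" "y = \<sigma> b" "z = \<sigma> c"
        using calculation img by (auto simp: interleaved_ties_def)
      ultimately show "(x, y, z) \<in> map_prod \<sigma> (map_prod \<sigma> \<sigma>) ` interleaved_ties le F X"
        using mono rel col by (auto simp: interleaved_ties_def image_iff intro!: bexI[of _ "(a, b, c)"])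
    qed
  qed (use img mono rel col in \<open>auto simp: interleaved_ties_def\<close>)
  have "inj_on (map_prod \<sigma> \<sigma>) (X \<times> X)" "inj_on (map_prod \<sigma> (map_prod \<sigma> \<sigma>)) (X \<times> X \<times> X)"
    using inj by (simp_all add: map_prod_inj_on)
  moreover have "ascending_ties le F X \<subseteq> X \<times> X" "ascending_ties (\<lambda>i j. le j i) F X \<subseteq> X \<times> X"
    "interleaved_ties le F X \<subseteq> X \<times> X \<times> X"
    by (auto simp: ascending_ties_def interleaved_ties_def)
  moreover have "ascending_ties le' F' Y = map_prod \<sigma> \<sigma> ` ascending_ties le F X"
    "ascending_ties (\<lambda>i j. le' j i) F' Y = map_prod \<sigma> \<sigma> ` ascending_ties (\<lambda>i j. le j i) F X"
    by (rule pairs; simp add: rel)+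
  ultimately show ?thesis
    unfolding weight_def triples by (simp add: card_image inj_on_subset)
qed

lemma weight_Un:
  assumes "finite A" "finite B" "A \<inter> B = {}"
    and cross: "\<And>a b. a \<in> A \<Longrightarrow> b \<in> B \<Longrightarrow> F a = F b \<Longrightarrow> \<not> le a b \<and> \<not> le b a \<and> a < b"
  shows "weight q1 q2 q3 le F (A \<union> B) = weight q1 q2 q3 le F A * weight q1 q2 q3 le F B"
proof -
  have pairs: "ascending_ties le' F (A \<union> B) = ascending_ties le' F A \<union> ascending_ties le' F B"
    "ascending_ties le' F A \<inter> ascending_ties le' F B = {}"
    if "le' = le \<or> le' = (\<lambda>i j. le j i)" for le'
    using that cross assms(3) by (auto simp: ascending_ties_def)
  have "interleaved_ties le F (A \<union> B) \<subseteq> interleaved_ties le F A \<union> interleaved_ties le F B"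
  proof
    fix t assume t: "t \<in> interleaved_ties le F (A \<union> B)"
    then obtain i j k where ijk: "t = (i, j, k)" by (cases t)
    from t have "i \<in> A \<union> B" "j \<in> A \<union> B" "k \<in> A \<union> B" "i < j" "j < k" "le i k" "le k i"
      "F i = F j" "F j = F k"
      by (auto simp: interleaved_ties_def ijk)
    then have "i \<in> A \<and> j \<in> A \<and> k \<in> A \<or> i \<in> B \<and> j \<in> B \<and> k \<in> B"
      using cross[of i k] cross[of k i] cross[of k j] cross[of j i] by auto
    with t show "t \<in> interleaved_ties le F A \<union> interleaved_ties le F B"
      by (auto simp: interleaved_ties_def ijk)
  qed
  then have triples: "interleaved_ties le F (A \<union> B) = interleaved_ties le F A \<union> interleaved_ties le F B"
    "interleaved_ties le F A \<inter> interleaved_ties le F B = {}"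
    using assms(3) by (auto simp: interleaved_ties_def)
  show ?thesis
    unfolding weight_def pairs(1)[of le, simplified] pairs(1)[of "\<lambda>i j. le j i", simplified] triples(1)
    using assms(1,2) pairs(2)[of le, simplified] pairs(2)[of "\<lambda>i j. le j i", simplified] triples(2)
    by (simp add: card_Un_disjoint finite_ascending_ties finite_interleaved_ties power_add mult_ac)
qed

section \<open>Generalised T-partitions and the coefficients of \<open>\<Gamma>\<^sub>q\<close>\<close>

lemma TpartitionsD: "w \<in> Tpartitions T \<Longrightarrow> packed w \<and> length w = tdeg T"
  by (simp add: Tpartitions_def)

lemma Tpartitions_mono:
  "w \<in> Tpartitions T \<Longrightarrow> i \<in> {1..tdeg T} \<Longrightarrow> j \<in> {1..tdeg T} \<Longrightarrow> tleq T i j \<Longrightarrow> wat w i \<le> wat w j"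
  by (simp add: Tpartitions_def)

lemma finite_Tpartitions: "finite (Tpartitions T)"
  by (rule finite_subset[OF _ finite_packed_length[of "tdeg T"]]) (auto dest: TpartitionsD)

lemma ell_eq_weight:
  "q1 ^ ell1 T f * q2 ^ ell2 T f * q3 ^ ell3 T f = weight q1 q2 q3 (tleq T) (wat f) {1..tdeg T}"
proof -
  let ?F = "wat f" and ?X = "{1..tdeg T}"
  have "ell1 T f = card (ascending_ties (tleq T) ?F ?X)" "ell3 T f = card (interleaved_ties (tleq T) ?F ?X)"
    unfolding ell1_def ell3_def ascending_ties_def interleaved_ties_def tless_def tsim_def
    by (rule arg_cong[where f = card]; auto)+
  moreover have "ell2 T f = card (prod.swap ` ascending_ties (\<lambda>i j. tleq T j i) ?F ?X)"
    unfolding ell2_def ascending_ties_def tless_def by (rule arg_cong[where f = card]) auto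
  ultimately show ?thesis
    by (simp add: weight_def card_image)
qed

lemma gamma_basis_eq:
  "gamma_basis q1 q2 q3 T =
     (\<Sum>f\<in>Tpartitions T. Poly_Mapping.single f (weight q1 q2 q3 (tleq T) (wat f) {1..tdeg T}))"
  by (simp add: gamma_basis_def ell_eq_weight)

lemma lookup_gamma_basis:
  "Poly_Mapping.lookup (gamma_basis q1 q2 q3 T) w =
     (if w \<in> Tpartitions T then weight q1 q2 q3 (tleq T) (wat w) {1..tdeg T} else 0)"
  unfolding gamma_basis_def lookup_sum ell_eq_weight
  by (simp add: lookup_single when_def finite_Tpartitions sum.delta)

lemma keys_gamma_basis: "Poly_Mapping.keys (gamma_basis q1 q2 q3 T) \<subseteq> Tpartitions T"
  by (auto simp: in_keys_iff lookup_gamma_basis split: if_splits)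

lemma Gamma_single: "Gamma q1 q2 q3 (Poly_Mapping.single T 1) = gamma_basis q1 q2 q3 T"
  by (simp add: Gamma_def)

lemma keys_Gamma: "Poly_Mapping.keys (Gamma q1 q2 q3 x) \<subseteq> (\<Union>T\<in>Poly_Mapping.keys x. Tpartitions T)"
  unfolding Gamma_def using keys_lin_ext keys_gamma_basis by fastforce

lemma keys_Gamma_packed: "Poly_Mapping.keys (Gamma q1 q2 q3 x) \<subseteq> {w. packed w}"
  using keys_Gamma TpartitionsD by fastforce

lemma keys_Gamma_homogeneous:
  "Poly_Mapping.keys x \<subseteq> topologies n \<Longrightarrow> Poly_Mapping.keys (Gamma q1 q2 q3 x) \<subseteq> {w. packed w \<and> length w = n}"
  using keys_Gamma[of q1 q2 q3 x] TpartitionsD tdeg_topology by fastforce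

lemma Gamma_unit: "Gamma q1 q2 q3 HT_unit = WQ_unit"
proof -
  have "Tpartitions {{}} = {[]}"
    by (auto simp: Tpartitions_def tdeg_def packed_def intro: exI[of _ 0])
  then show ?thesis
    unfolding HT_unit_def WQ_unit_def Gamma_single
    by (intro poly_mapping_eqI) (simp add: lookup_gamma_basis tdeg_def lookup_single when_def)
qed

lemma lookup_gamma_basis_Nil:
  assumes "T \<in> topologies n"
  shows "Poly_Mapping.lookup (gamma_basis q1 q2 q3 T) [] = (if T = {{}} then 1 else 0)"
proof -
  have "[] \<in> Tpartitions T \<longleftrightarrow> n = 0"
    using assms by (auto simp: Tpartitions_def packed_def tdeg_topology)
  moreover have "n = 0 \<longleftrightarrow> T = {{}}"
    using assms topologies_0 topologiesD(3)[OF assms] by auto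
  ultimately show ?thesis
    using assms by (auto simp: lookup_gamma_basis tdeg_topology)
qed

lemma Gamma_counit:
  assumes "Poly_Mapping.keys x \<subseteq> all_topologies"
  shows "WQ_counit (Gamma q1 q2 q3 x) = HT_counit x"
proof -
  have "WQ_counit (Gamma q1 q2 q3 x) =
      (\<Sum>T\<in>Poly_Mapping.keys x. if T = {{}} then Poly_Mapping.lookup x T else 0)"
    unfolding WQ_counit_def Gamma_def lookup_lin_ext
  proof (intro sum.cong refl)
    fix T assume "T \<in> Poly_Mapping.keys x"
    then obtain n where "T \<in> topologies n" using assms by (auto simp: all_topologies_def)
    then show "Poly_Mapping.lookup x T * Poly_Mapping.lookup (gamma_basis q1 q2 q3 T) [] =
        (if T = {{}} then Poly_Mapping.lookup x T else 0)"
      by (simp add: lookup_gamma_basis_Nil)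
  qed
  also have "\<dots> = HT_counit x"
    by (subst sum.delta) (auto simp: HT_counit_def in_keys_iff)
  finally show ?thesis .
qed

section \<open>The involutions \<open>\<iota>\<close> and \<open>j\<close>\<close>

lemma length_wq_j [simp]: "length (wq_j f) = length f"
  by (simp add: wq_j_def)

lemma wat_wq_j: "i \<in> {1..length f} \<Longrightarrow> wat (wq_j f) i = wmax f + 1 - wat f i"
proof -
  assume "i \<in> {1..length f}"
  then have "i - 1 < length f" by auto
  then show ?thesis by (simp add: wq_j_def wat_def)
qed

lemma set_wq_j: "packed f \<Longrightarrow> set (wq_j f) = set f"
proof -
  assume "packed f"
  then have "set (wq_j f) = (\<lambda>x. wmax f + 1 - x) ` {1..wmax f}" "set f = {1..wmax f}"
    by (simp_all add: wq_j_def set_packed)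
  moreover have "(\<lambda>x. wmax f + 1 - x) ` {1..wmax f} = {1..wmax f}"
  proof
    show "{1..wmax f} \<subseteq> (\<lambda>x. wmax f + 1 - x) ` {1..wmax f}"
    proof
      fix y assume "y \<in> {1..wmax f}"
      then show "y \<in> (\<lambda>x. wmax f + 1 - x) ` {1..wmax f}"
        by (intro image_eqI[of _ _ "wmax f + 1 - y"]) auto
    qed
  qed auto
  ultimately show ?thesis by simp
qed

lemma packed_wq_j: "packed f \<Longrightarrow> packed (wq_j f)"
  by (metis packed_iff set_wq_j wmax_cong)

lemma wq_j_wq_j: "packed f \<Longrightarrow> wq_j (wq_j f) = f"
proof -
  assume p: "packed f"
  have m: "wmax (wq_j f) = wmax f" using set_wq_j[OF p] wmax_cong by blast
  have "wq_j (wq_j f) = map (\<lambda>x. wmax f + 1 - (wmax f + 1 - x)) f"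
    unfolding wq_j_def[of "wq_j f"] m by (simp add: wq_j_def)
  also have "\<dots> = f"
    using set_packed[OF p] by (intro map_idI) auto
  finally show ?thesis .
qed

lemma tdeg_topo_iota: "T \<in> topologies n \<Longrightarrow> tdeg (topo_iota T) = n"
proof -
  assume T: "T \<in> topologies n"
  have "\<Union>(topo_iota T) = {1..n}"
    using topologiesD(2)[OF T] by (auto simp: topo_iota_def tdeg_topology[OF T])
  then show ?thesis by (simp add: tdeg_def)
qed

lemma tleq_topo_iota:
  "T \<in> topologies n \<Longrightarrow> i \<in> {1..n} \<Longrightarrow> j \<in> {1..n} \<Longrightarrow> tleq (topo_iota T) i j \<longleftrightarrow> tleq T j i"
proof -
  assume T: "T \<in> topologies n" and "i \<in> {1..n}" "j \<in> {1..n}"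
  then have "tleq (topo_iota T) i j \<longleftrightarrow> (\<forall>U\<in>T. i \<in> {1..n} - U \<longrightarrow> j \<in> {1..n} - U)"
    unfolding tleq_def topo_iota_def tdeg_topology[OF T] by blast
  then show ?thesis
    unfolding tleq_def using \<open>i \<in> {1..n}\<close> \<open>j \<in> {1..n}\<close> by blast
qed

lemma wq_j_in_Tpartitions_iff:
  assumes T: "T \<in> topologies n" and f: "packed f"
  shows "wq_j f \<in> Tpartitions (topo_iota T) \<longleftrightarrow> f \<in> Tpartitions T"
proof (cases "length f = n")
  case True
  have "wat (wq_j f) i \<le> wat (wq_j f) j \<longleftrightarrow> wat f j \<le> wat f i"
    if "i \<in> {1..n}" "j \<in> {1..n}" for i j
    using that packed_wat_bounds[OF f, of i] packed_wat_bounds[OF f, of j] True by (auto simp: wat_wq_j)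
  then have "(\<forall>i\<in>{1..n}. \<forall>j\<in>{1..n}. tleq (topo_iota T) i j \<longrightarrow> wat (wq_j f) i \<le> wat (wq_j f) j) \<longleftrightarrow>
      (\<forall>i\<in>{1..n}. \<forall>j\<in>{1..n}. tleq T i j \<longrightarrow> wat f i \<le> wat f j)"
    by (simp add: tleq_topo_iota[OF T]) blast
  then show ?thesis
    unfolding Tpartitions_def tdeg_topo_iota[OF T] tdeg_topology[OF T] using f packed_wq_j[OF f] True
    by simp
qed (simp add: Tpartitions_def tdeg_topo_iota[OF T] tdeg_topology[OF T])

lemma weight_topo_iota:
  assumes T: "T \<in> topologies n" and f: "f \<in> Tpartitions T"
  shows "weight q1 q2 q3 (tleq (topo_iota T)) (wat (wq_j f)) {1..tdeg (topo_iota T)} =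
         weight q2 q1 q3 (tleq T) (wat f) {1..tdeg T}"
proof -
  have p: "packed f" and l: "length f = n"
    using f TpartitionsD tdeg_topology[OF T] by auto
  have "weight q1 q2 q3 (tleq (topo_iota T)) (wat (wq_j f)) {1..n} =
      weight q1 q2 q3 (\<lambda>i j. tleq T j i) (wat f) {1..n}"
  proof (rule weight_relabel[where \<sigma> = id])
    fix i j assume ij: "i \<in> {1..n}" "j \<in> {1..n}"
    then show "tleq (topo_iota T) (id i) (id j) \<longleftrightarrow> tleq T j i"
      by (simp add: tleq_topo_iota[OF T])
    show "wat (wq_j f) (id i) = wat (wq_j f) (id j) \<longleftrightarrow> wat f i = wat f j"
      using ij packed_wat_bounds[OF p, of i] packed_wat_bounds[OF p, of j] l by (auto simp: wat_wq_j)
  qed simp_all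
  then show ?thesis
    unfolding tdeg_topo_iota[OF T] tdeg_topology[OF T] weight_converse[of q1 q2 q3 "tleq T"] .
qed

text \<open>\<open>j\<close> maps the \<open>T\<close>-partitions bijectively onto the \<open>\<iota>(T)\<close>-partitions.\<close>

lemma WQ_j_gamma_basis:
  assumes T: "T \<in> topologies n"
  shows "WQ_j (gamma_basis q2 q1 q3 T) = gamma_basis q1 q2 q3 (topo_iota T)"
proof -
  let ?w = "\<lambda>g. weight q1 q2 q3 (tleq (topo_iota T)) (wat g) {1..tdeg (topo_iota T)}"
  have packed: "\<And>f. f \<in> Tpartitions T \<Longrightarrow> packed f"
    by (simp add: TpartitionsD)
  have "WQ_j (gamma_basis q2 q1 q3 T) = (\<Sum>f\<in>Tpartitions T. Poly_Mapping.single (wq_j f) (?w (wq_j f)))"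
    unfolding WQ_j_def gamma_basis_eq lin_ext_sum lin_ext_single
  proof (intro sum.cong refl)
    fix f assume "f \<in> Tpartitions T"
    then show "pm_smult (weight q2 q1 q3 (tleq T) (wat f) {1..tdeg T}) (Poly_Mapping.single (wq_j f) 1) =
        Poly_Mapping.single (wq_j f) (?w (wq_j f))"
      by (simp only: pm_smult_single weight_topo_iota[OF T])
  qed
  also have "\<dots> = (\<Sum>g\<in>wq_j ` Tpartitions T. Poly_Mapping.single g (?w g))"
  proof -
    have "inj_on wq_j (Tpartitions T)"
      by (rule inj_onI) (metis packed wq_j_wq_j)
    then show ?thesis by (simp add: sum.reindex)
  qed
  also have "wq_j ` Tpartitions T = Tpartitions (topo_iota T)"
  proof
    show "wq_j ` Tpartitions T \<subseteq> Tpartitions (topo_iota T)"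
      using wq_j_in_Tpartitions_iff[OF T] packed by blast
    show "Tpartitions (topo_iota T) \<subseteq> wq_j ` Tpartitions T"
    proof
      fix g assume g: "g \<in> Tpartitions (topo_iota T)"
      then have "packed g" by (simp add: TpartitionsD)
      then have "g = wq_j (wq_j g)" "wq_j g \<in> Tpartitions T"
        using wq_j_in_Tpartitions_iff[OF T, of "wq_j g"] g by (simp_all add: wq_j_wq_j packed_wq_j)
      then show "g \<in> wq_j ` Tpartitions T" by blast
    qed
  qed
  finally show ?thesis
    by (simp add: gamma_basis_eq)
qed

lemma Gamma_topo_iota:
  assumes "Poly_Mapping.keys x \<subseteq> all_topologies"
  shows "WQ_j (Gamma q2 q1 q3 x) = Gamma q1 q2 q3 (HT_iota x)"
proof -
  have "WQ_j (Gamma q2 q1 q3 x) = lin_ext (\<lambda>T. WQ_j (gamma_basis q2 q1 q3 T)) x"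
    unfolding WQ_j_def Gamma_def lin_ext_lin_ext ..
  also have "\<dots> = lin_ext (\<lambda>T. gamma_basis q1 q2 q3 (topo_iota T)) x"
    using assms by (intro lin_ext_cong) (auto simp: all_topologies_def WQ_j_gamma_basis)
  also have "\<dots> = Gamma q1 q2 q3 (HT_iota x)"
    unfolding HT_iota_def Gamma_def lin_ext_lin_ext by simp
  finally show ?thesis .
qed

section \<open>\<open>\<Gamma>\<^sub>q\<close> is multiplicative\<close>

lemma lookup_wq_prod:
  "Poly_Mapping.lookup (wq_prod f g :: nat list \<Rightarrow>\<^sub>0 'k::field) w =
     (if packed w \<and> length w = length f + length g \<and> pack (take (length f) w) = f \<and>
         pack (drop (length f) w) = g then 1 else 0)"
proof -
  have fin: "finite {w. packed w \<and> length w = length f + length g \<and>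
        pack (take (length f) w) = f \<and> pack (drop (length f) w) = g}"
    by (rule finite_subset[OF _ finite_packed_length[of "length f + length g"]]) auto
  show ?thesis
    unfolding wq_prod_def lookup_sum by (simp add: lookup_single when_def sum.delta[OF fin])
qed

lemma lookup_WQ_mult_homogeneous:
  fixes a b :: "nat list \<Rightarrow>\<^sub>0 'k::field"
  assumes a: "Poly_Mapping.keys a \<subseteq> {f. length f = n}" and b: "Poly_Mapping.keys b \<subseteq> {g. length g = n'}"
  shows "Poly_Mapping.lookup (WQ_mult a b) w = (if packed w \<and> length w = n + n' then
           Poly_Mapping.lookup a (pack (take n w)) * Poly_Mapping.lookup b (pack (drop n w)) else 0)"
proof -
  let ?f = "pack (take n w)" and ?g = "pack (drop n w)" and ?P = "packed w \<and> length w = n + n'"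
  have "Poly_Mapping.lookup (WQ_mult a b) w = (\<Sum>f\<in>Poly_Mapping.keys a. \<Sum>g\<in>Poly_Mapping.keys b.
      Poly_Mapping.lookup a f * Poly_Mapping.lookup b g * (if ?P \<and> (f, g) = (?f, ?g) then 1 else 0))"
    unfolding WQ_mult_def bilin_ext_def lookup_sum lookup_pm_smult
  proof (intro sum.cong refl)
    fix f g assume "f \<in> Poly_Mapping.keys a" "g \<in> Poly_Mapping.keys b"
    then have "length f = n" "length g = n'" using a b by auto
    then show "Poly_Mapping.lookup a f * Poly_Mapping.lookup b g * Poly_Mapping.lookup (wq_prod f g) w =
        Poly_Mapping.lookup a f * Poly_Mapping.lookup b g * (if ?P \<and> (f, g) = (?f, ?g) then 1 else 0)"
      unfolding lookup_wq_prod by auto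
  qed
  also have "\<dots> = (\<Sum>p\<in>Poly_Mapping.keys a \<times> Poly_Mapping.keys b.
      if p = (?f, ?g) then (if ?P then Poly_Mapping.lookup a (fst p) * Poly_Mapping.lookup b (snd p) else 0) else 0)"
    unfolding sum.cartesian_product by (intro sum.cong refl) (auto split: if_splits)
  also have "\<dots> = (if ?P then Poly_Mapping.lookup a ?f * Poly_Mapping.lookup b ?g else 0)"
    by (subst sum.delta) (auto simp: in_keys_iff)
  finally show ?thesis .
qed

lemma mem_image_add: "(k::nat) \<in> (\<lambda>x. x + n) ` U \<longleftrightarrow> n \<le> k \<and> k - n \<in> U"
  by (auto simp: image_iff intro: bexI[of _ "k - n"])

context
  fixes T T' :: "nat set set" and n n' :: nat
  assumes T: "T \<in> topologies n" and T': "T' \<in> topologies n'"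
begin

lemma mem_topo_prod: "V \<in> topo_prod T T' \<longleftrightarrow> (\<exists>U\<in>T. \<exists>U'\<in>T'. V = U \<union> (\<lambda>k. k + n) ` U')"
  by (auto simp: topo_prod_def tdeg_topology[OF T])

lemma tdeg_topo_prod: "tdeg (topo_prod T T') = n + n'"
proof -
  have "\<Union>(topo_prod T T') \<subseteq> {1..n + n'}"
    using topologiesD(1)[OF T] topologiesD(1)[OF T'] by (fastforce simp: mem_topo_prod mem_image_add)
  moreover have "{1..n} \<union> (\<lambda>k. k + n) ` {1..n'} \<in> topo_prod T T'"
    using topologiesD(3)[OF T] topologiesD(3)[OF T'] mem_topo_prod by blast
  moreover have "{1..n + n'} \<subseteq> {1..n} \<union> (\<lambda>k. k + n) ` {1..n'}"
    by (auto simp: mem_image_add)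
  ultimately have "\<Union>(topo_prod T T') = {1..n + n'}" by blast
  then show ?thesis by (simp add: tdeg_def)
qed

lemma tleq_topo_prod:
  "tleq (topo_prod T T') i j \<longleftrightarrow>
     (\<forall>U\<in>T. \<forall>U'\<in>T'. i \<in> U \<union> (\<lambda>k. k + n) ` U' \<longrightarrow> j \<in> U \<union> (\<lambda>k. k + n) ` U')"
proof -
  have "topo_prod T T' = (\<lambda>(U, U'). U \<union> (\<lambda>k. k + n) ` U') ` (T \<times> T')"
    by (auto simp: topo_prod_def tdeg_topology[OF T])
  then show ?thesis
    unfolding tleq_def by auto
qed

lemma tleq_topo_prod_left:
  assumes "i \<le> n" "j \<le> n"
  shows "tleq (topo_prod T T') i j \<longleftrightarrow> tleq T i j"
proof -
  have "k \<in> U \<union> (\<lambda>k. k + n) ` U' \<longleftrightarrow> k \<in> U" if "U' \<in> T'" "k \<le> n" for U U' k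
    using that topologiesD(1)[OF T'] by (force simp: mem_image_add)
  then have "tleq (topo_prod T T') i j \<longleftrightarrow> (\<forall>U\<in>T. \<forall>U'\<in>T'. i \<in> U \<longrightarrow> j \<in> U)"
    using assms by (simp add: tleq_topo_prod)
  also have "\<dots> \<longleftrightarrow> tleq T i j"
    unfolding tleq_def using topologiesD(2)[OF T'] by blast
  finally show ?thesis .
qed

lemma tleq_topo_prod_right:
  assumes "n < i" "n < j"
  shows "tleq (topo_prod T T') i j \<longleftrightarrow> tleq T' (i - n) (j - n)"
proof -
  have "k \<in> U \<union> (\<lambda>k. k + n) ` U' \<longleftrightarrow> k - n \<in> U'" if "U \<in> T" "n < k" for U U' k
    using that topologiesD(1)[OF T] by (force simp: mem_image_add)
  then have "tleq (topo_prod T T') i j \<longleftrightarrow> (\<forall>U\<in>T. \<forall>U'\<in>T'. i - n \<in> U' \<longrightarrow> j - n \<in> U')"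
    using assms by (simp add: tleq_topo_prod)
  also have "\<dots> \<longleftrightarrow> tleq T' (i - n) (j - n)"
    unfolding tleq_def using topologiesD(2)[OF T] by blast
  finally show ?thesis .
qed

lemma tleq_topo_prod_cross:
  assumes i: "i \<in> {1..n}" and j: "j \<in> {n<..n + n'}"
  shows "\<not> tleq (topo_prod T T') i j \<and> \<not> tleq (topo_prod T T') j i"
proof -
  let ?A = "{1..n} \<union> (\<lambda>k. k + n) ` {}" and ?B = "{} \<union> (\<lambda>k. k + n) ` {1..n'}"
  have "?A \<in> topo_prod T T'" "?B \<in> topo_prod T T'"
    using topologiesD(2,3)[OF T] topologiesD(2,3)[OF T'] mem_topo_prod by blast+
  moreover have "i \<in> ?A" "j \<notin> ?A"
    using i j by simp_all
  moreover have "j \<in> ?B" "i \<notin> ?B"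
    using i j by (auto intro: image_eqI[of j _ "j - n"])
  ultimately show ?thesis
    unfolding tleq_def by (meson bspec)
qed

lemma topo_prod_monotone_iff:
  "(\<forall>i\<in>{1..n+n'}. \<forall>j\<in>{1..n+n'}. tleq (topo_prod T T') i j \<longrightarrow> F i \<le> F j) \<longleftrightarrow>
     (\<forall>i\<in>{1..n}. \<forall>j\<in>{1..n}. tleq T i j \<longrightarrow> F i \<le> F j) \<and>
     (\<forall>i\<in>{1..n'}. \<forall>j\<in>{1..n'}. tleq T' i j \<longrightarrow> F (i + n) \<le> F (j + n))"
  (is "?P \<longleftrightarrow> ?L \<and> ?R")
proof
  assume P: ?P
  show "?L \<and> ?R"
  proof
    show ?L using P tleq_topo_prod_left by auto
    show ?R
    proof (intro ballI impI)
      fix i j assume ij: "i \<in> {1..n'}" "j \<in> {1..n'}" and "tleq T' i j"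
      then have "tleq (topo_prod T T') (i + n) (j + n)"
        using tleq_topo_prod_right[of "i + n" "j + n"] by simp
      then show "F (i + n) \<le> F (j + n)" using P ij by auto
    qed
  qed
next
  assume LR: "?L \<and> ?R"
  show ?P
  proof (intro ballI impI)
    fix i j assume i: "i \<in> {1..n+n'}" and j: "j \<in> {1..n+n'}" and t: "tleq (topo_prod T T') i j"
    consider "i \<le> n" "j \<le> n" | "n < i" "n < j" | "i \<le> n" "n < j" | "n < i" "j \<le> n"
      by linarith
    then show "F i \<le> F j"
    proof cases
      case 1
      then show ?thesis using LR i j t tleq_topo_prod_left by auto
    next
      case 2
      then have "i - n \<in> {1..n'}" "j - n \<in> {1..n'}" "tleq T' (i - n) (j - n)"
        using i j t tleq_topo_prod_right by auto
      then show ?thesis using LR 2 by fastforce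
    next
      case 3
      then show ?thesis using tleq_topo_prod_cross[of i j] t i j by auto
    next
      case 4
      then show ?thesis using tleq_topo_prod_cross[of j i] t i j by auto
    qed
  qed
qed

context
  fixes w :: "nat list"
  assumes w: "length w = n + n'"
begin

lemma Tpartitions_topo_prod_iff:
  "w \<in> Tpartitions (topo_prod T T') \<longleftrightarrow>
     packed w \<and> pack (take n w) \<in> Tpartitions T \<and> pack (drop n w) \<in> Tpartitions T'"
proof -
  let ?f = "pack (take n w)" and ?g = "pack (drop n w)"
  have "wat ?f i \<le> wat ?f j \<longleftrightarrow> wat w i \<le> wat w j" if "i \<in> {1..n}" "j \<in> {1..n}" for i j
    using that w by (simp add: wat_pack_le_iff wat_take)
  moreover have "wat ?g i \<le> wat ?g j \<longleftrightarrow> wat w (i + n) \<le> wat w (j + n)" if "i \<in> {1..n'}" "j \<in> {1..n'}" for i j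
    using that w by (simp add: wat_pack_le_iff wat_drop)
  ultimately show ?thesis
    unfolding Tpartitions_def tdeg_topo_prod tdeg_topology[OF T] tdeg_topology[OF T'] topo_prod_monotone_iff
    using w packed_pack by auto
qed

lemma weight_topo_prod:
  "weight q1 q2 q3 (tleq (topo_prod T T')) (wat w) {1..tdeg (topo_prod T T')} =
     weight q1 q2 q3 (tleq T) (wat (pack (take n w))) {1..tdeg T} *
     weight q1 q2 q3 (tleq T') (wat (pack (drop n w))) {1..tdeg T'}"
proof -
  let ?P = "topo_prod T T'"
  have split: "{1..n + n'} = {1..n} \<union> {n<..n + n'}" by auto
  have "weight q1 q2 q3 (tleq ?P) (wat w) {1..n + n'} =
      weight q1 q2 q3 (tleq ?P) (wat w) {1..n} * weight q1 q2 q3 (tleq ?P) (wat w) {n<..n + n'}"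
    unfolding split by (rule weight_Un) (use tleq_topo_prod_cross in auto)
  also have "weight q1 q2 q3 (tleq ?P) (wat w) {1..n} = weight q1 q2 q3 (tleq T) (wat (pack (take n w))) {1..n}"
    using w by (intro weight_relabel[where \<sigma> = id, symmetric])
      (auto simp: tleq_topo_prod_left wat_pack_eq_iff wat_take)
  also have "weight q1 q2 q3 (tleq ?P) (wat w) {n<..n + n'} =
      weight q1 q2 q3 (tleq T') (wat (pack (drop n w))) {1..n'}"
  proof (rule weight_relabel[where \<sigma> = "\<lambda>i. i - n", symmetric])
    show "(\<lambda>i. i - n) ` {n<..n + n'} = {1..n'}"
    proof
      show "{1..n'} \<subseteq> (\<lambda>i. i - n) ` {n<..n + n'}"
      proof
        fix x assume "x \<in> {1..n'}"
        then show "x \<in> (\<lambda>i. i - n) ` {n<..n + n'}" by (intro image_eqI[of x _ "x + n"]) auto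
      qed
    qed auto
  next
    fix a b assume ab: "a \<in> {n<..n + n'}" "b \<in> {n<..n + n'}"
    then have "a - n \<in> {1..length (drop n w)}" "b - n \<in> {1..length (drop n w)}"
      using w by auto
    then show "wat (pack (drop n w)) (a - n) = wat (pack (drop n w)) (b - n) \<longleftrightarrow> wat w a = wat w b"
      using w ab by (simp add: wat_pack_eq_iff wat_drop)
  qed (auto simp: tleq_topo_prod_right)
  finally show ?thesis
    by (simp add: tdeg_topo_prod tdeg_topology[OF T] tdeg_topology[OF T'])
qed

end

lemma gamma_basis_topo_prod:
  "gamma_basis q1 q2 q3 (topo_prod T T') = WQ_mult (gamma_basis q1 q2 q3 T) (gamma_basis q1 q2 q3 T')"
proof (rule poly_mapping_eqI)
  fix w
  have "Poly_Mapping.keys (gamma_basis q1 q2 q3 S) \<subseteq> {f. length f = m}" if "S \<in> topologies m" for S m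
    using keys_gamma_basis TpartitionsD tdeg_topology[OF that] by fastforce
  then have "Poly_Mapping.lookup (WQ_mult (gamma_basis q1 q2 q3 T) (gamma_basis q1 q2 q3 T')) w =
      (if packed w \<and> length w = n + n' then
         Poly_Mapping.lookup (gamma_basis q1 q2 q3 T) (pack (take n w)) *
         Poly_Mapping.lookup (gamma_basis q1 q2 q3 T') (pack (drop n w)) else 0)"
    using T T' by (intro lookup_WQ_mult_homogeneous)
  moreover have "Poly_Mapping.lookup (gamma_basis q1 q2 q3 (topo_prod T T')) w =
      (if packed w \<and> length w = n + n' then
         Poly_Mapping.lookup (gamma_basis q1 q2 q3 T) (pack (take n w)) *
         Poly_Mapping.lookup (gamma_basis q1 q2 q3 T') (pack (drop n w)) else 0)"
  proof (cases "packed w \<and> length w = n + n'")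
    case True
    then show ?thesis
      using weight_topo_prod[of w q1 q2 q3] by (simp add: lookup_gamma_basis Tpartitions_topo_prod_iff)
  next
    case False
    then have "w \<notin> Tpartitions (topo_prod T T')"
      using TpartitionsD tdeg_topo_prod by metis
    then show ?thesis
      unfolding if_not_P[OF False] by (simp add: lookup_gamma_basis)
  qed
  ultimately show "Poly_Mapping.lookup (gamma_basis q1 q2 q3 (topo_prod T T')) w =
      Poly_Mapping.lookup (WQ_mult (gamma_basis q1 q2 q3 T) (gamma_basis q1 q2 q3 T')) w"
    by simp
qed

end

lemma Gamma_mult:
  assumes x: "Poly_Mapping.keys x \<subseteq> all_topologies" and y: "Poly_Mapping.keys y \<subseteq> all_topologies"
  shows "Gamma q1 q2 q3 (HT_mult x y) = WQ_mult (Gamma q1 q2 q3 x) (Gamma q1 q2 q3 y)"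
proof -
  let ?g = "gamma_basis q1 q2 q3"
  have "Gamma q1 q2 q3 (HT_mult x y) = lin_ext (\<lambda>T. lin_ext (\<lambda>T'. ?g (topo_prod T T')) y) x"
    unfolding Gamma_def HT_mult_def bilin_ext_eq_lin_ext lin_ext_lin_ext by simp
  also have "\<dots> = lin_ext (\<lambda>T. lin_ext (\<lambda>T'. WQ_mult (?g T) (?g T')) y) x"
    using x y by (intro lin_ext_cong) (auto simp: all_topologies_def intro: gamma_basis_topo_prod)
  also have "\<dots> = WQ_mult (Gamma q1 q2 q3 x) (Gamma q1 q2 q3 y)"
    unfolding WQ_mult_def bilin_ext_eq_lin_ext Gamma_def lin_ext_lin_ext
    by (simp add: lin_ext_commute[of "\<lambda>u c. lin_ext (wq_prod u) (?g c)"])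
  finally show ?thesis .
qed

section \<open>\<open>\<Gamma>\<^sub>q\<close> is comultiplicative\<close>

abbreviation induced :: "nat set set \<Rightarrow> nat set \<Rightarrow> nat set set" where
  "induced T X \<equiv> std X (restr T X)"

definition wq_cut :: "nat list \<Rightarrow> nat \<Rightarrow> nat list \<times> nat list" where
  "wq_cut f k = (filter (\<lambda>x. x \<in> {1..k}) f, pack (filter (\<lambda>x. x \<notin> {1..k}) f))"

text \<open>The inverse of cutting at level \<open>wmax u\<close>: positions outside \<open>U\<close> carry the letters of \<open>u\<close>,
  positions in \<open>U\<close> those of \<open>v\<close> raised above all letters of \<open>u\<close>.\<close>

definition merge_word :: "nat \<Rightarrow> nat set \<Rightarrow> nat list \<Rightarrow> nat list \<Rightarrow> nat list" where
  "merge_word n U u v = map (\<lambda>i. if i \<in> U then wat v (std_map U i) + wmax u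
     else wat u (std_map ({1..n} - U) i)) [1..<Suc n]"

lemma length_merge_word [simp]: "length (merge_word n U u v) = n"
  by (simp add: merge_word_def)

lemma wat_merge_word:
  assumes "i \<in> {1..n}"
  shows "wat (merge_word n U u v) i =
           (if i \<in> U then wat v (std_map U i) + wmax u else wat u (std_map ({1..n} - U) i))"
proof -
  have "i - 1 < n" "[1..<Suc n] ! (i - 1) = i"
    using assms by (auto simp del: upt_Suc)
  then show ?thesis
    unfolding merge_word_def wat_def[of "map _ _"] by (simp del: upt_Suc)
qed

context
  fixes T :: "nat set set" and n :: nat
  assumes T: "T \<in> topologies n"
begin

lemma tdeg_induced: "X \<subseteq> {1..n} \<Longrightarrow> tdeg (induced T X) = card X"
proof -
  assume X: "X \<subseteq> {1..n}"
  then have "\<Union>(restr T X) = X"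
    using topologiesD(3)[OF T] by (auto simp: restr_def)
  moreover have "\<Union>(induced T X) = std_map X ` \<Union>(restr T X)"
    by (auto simp: std_def)
  moreover have "finite X"
    using X finite_subset by blast
  ultimately have "\<Union>(induced T X) = {1..card X}"
    by (simp add: std_map_image)
  then show ?thesis by (simp add: tdeg_def)
qed

lemma tleq_induced:
  assumes X: "X \<subseteq> {1..n}" and ij: "i \<in> X" "j \<in> X"
  shows "tleq (induced T X) (std_map X i) (std_map X j) \<longleftrightarrow> tleq T i j"
proof -
  have "inj_on (std_map X) X"
    using X finite_subset inj_on_std_map by blast
  then have "std_map X a \<in> std_map X ` (U \<inter> X) \<longleftrightarrow> a \<in> U" if "a \<in> X" for a U
    using that by (auto simp: inj_on_def)
  then show ?thesis
    unfolding tleq_def std_def restr_def using ij by (simp add: image_image)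
qed

lemma Tpartitions_induced_iff:
  assumes X: "X \<subseteq> {1..n}" and w: "length w = card X"
  shows "w \<in> Tpartitions (induced T X) \<longleftrightarrow>
           packed w \<and> (\<forall>i\<in>X. \<forall>j\<in>X. tleq T i j \<longrightarrow> wat w (std_map X i) \<le> wat w (std_map X j))"
proof -
  have "finite X"
    using X finite_subset by blast
  then have img: "{1..card X} = std_map X ` X"
    by (simp add: std_map_image)
  have "(\<forall>a\<in>std_map X ` X. \<forall>b\<in>std_map X ` X. tleq (induced T X) a b \<longrightarrow> wat w a \<le> wat w b) \<longleftrightarrow>
      (\<forall>i\<in>X. \<forall>j\<in>X. tleq T i j \<longrightarrow> wat w (std_map X i) \<le> wat w (std_map X j))"
    using tleq_induced[OF X] by auto
  then show ?thesis
    unfolding Tpartitions_def tdeg_induced[OF X] img using w by auto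
qed

lemma weight_induced:
  assumes X: "X \<subseteq> {1..n}"
    and col: "\<And>a b. a \<in> X \<Longrightarrow> b \<in> X \<Longrightarrow> wat w (std_map X a) = wat w (std_map X b) \<longleftrightarrow> F a = F b"
  shows "weight q1 q2 q3 (tleq (induced T X)) (wat w) {1..tdeg (induced T X)} = weight q1 q2 q3 (tleq T) F X"
proof -
  have "finite X" using X finite_subset by blast
  then show ?thesis
    unfolding tdeg_induced[OF X]
    by (intro weight_relabel[where \<sigma> = "std_map X"])
       (simp_all add: std_map_less_iff std_map_image tleq_induced[OF X] col)
qed

context
  fixes U :: "nat set" and u v :: "nat list"
  assumes U: "U \<in> T"
    and u: "u \<in> Tpartitions (induced T ({1..n} - U))" and v: "v \<in> Tpartitions (induced T U)"
begin

private lemma U_subset: "U \<subseteq> {1..n}"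
  using topologiesD(1)[OF T] U by blast

private lemma facts_u: "packed u" "length u = card ({1..n} - U)"
  using u TpartitionsD tdeg_induced[of "{1..n} - U"] by auto

private lemma facts_v: "packed v" "length v = card U"
  using v TpartitionsD tdeg_induced[OF U_subset] by auto

private lemma finite_U: "finite U"
  using U_subset finite_subset by blast

lemma merge_word_cases:
  assumes "i \<in> {1..n}"
  shows "i \<in> U \<and> wmax u < wat (merge_word n U u v) i \<or>
         i \<notin> U \<and> wat (merge_word n U u v) i \<in> {1..wmax u}"
proof (cases "i \<in> U")
  case True
  then show ?thesis
    using assms packed_wat_bounds[OF facts_v(1)] std_map_in_range[OF finite_U] facts_v(2)
    by (fastforce simp: wat_merge_word)
next
  case False
  then show ?thesis
    using assms packed_wat_bounds[OF facts_u(1)] std_map_in_range[of "{1..n} - U"] facts_u(2)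
    by (fastforce simp: wat_merge_word)
qed

lemma set_merge_word: "set (merge_word n U u v) = {1..wmax u + wmax v}"
proof -
  let ?m = "merge_word n U u v" and ?Uc = "{1..n} - U"
  have "set ?m = wat ?m ` ?Uc \<union> wat ?m ` U"
    using set_eq_wat_image[of ?m] U_subset by auto
  also have "wat ?m ` ?Uc = wat u ` (std_map ?Uc ` ?Uc)"
    by (auto simp: wat_merge_word image_image)
  also have "\<dots> = set u"
    using set_eq_wat_image[of u] std_map_image[of ?Uc] facts_u(2) by simp
  also have "wat ?m ` U = (\<lambda>x. x + wmax u) ` (wat v ` (std_map U ` U))"
    using U_subset by (auto simp: wat_merge_word image_image intro!: image_cong)
  also have "\<dots> = (\<lambda>x. x + wmax u) ` set v"
    using set_eq_wat_image[of v] std_map_image[OF finite_U] facts_v(2) by simp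
  also have "set u \<union> (\<lambda>x. x + wmax u) ` set v = {1..wmax u + wmax v}"
  proof
    show "{1..wmax u + wmax v} \<subseteq> set u \<union> (\<lambda>x. x + wmax u) ` set v"
    proof
      fix x assume "x \<in> {1..wmax u + wmax v}"
      then show "x \<in> set u \<union> (\<lambda>x. x + wmax u) ` set v"
        using set_packed[OF facts_u(1)] set_packed[OF facts_v(1)]
        by (cases "x \<le> wmax u") (auto intro!: image_eqI[of x _ "x - wmax u"])
    qed
  qed (use set_packed[OF facts_u(1)] set_packed[OF facts_v(1)] in auto)
  finally show ?thesis .
qed

lemma merge_word_in_Tpartitions: "merge_word n U u v \<in> Tpartitions T"
proof -
  let ?m = "merge_word n U u v" and ?Uc = "{1..n} - U"
  have "wat ?m i \<le> wat ?m j" if i: "i \<in> {1..n}" and j: "j \<in> {1..n}" and t: "tleq T i j" for i j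
  proof (cases "i \<in> U")
    case True
    then have "j \<in> U" using t U by (auto simp: tleq_def)
    then have "wat v (std_map U i) \<le> wat v (std_map U j)"
      using v True t facts_v(2) U_subset
      by (auto simp: Tpartitions_induced_iff[OF U_subset])
    then show ?thesis using True \<open>j \<in> U\<close> i j by (simp add: wat_merge_word)
  next
    case False
    show ?thesis
    proof (cases "j \<in> U")
      case True
      then show ?thesis using merge_word_cases[OF i] merge_word_cases[OF j] False by auto
    next
      case jU: False
      have "\<forall>i\<in>?Uc. \<forall>j\<in>?Uc. tleq T i j \<longrightarrow> wat u (std_map ?Uc i) \<le> wat u (std_map ?Uc j)"
        using u Tpartitions_induced_iff[OF Diff_subset facts_u(2)] by blast
      then have "wat u (std_map ?Uc i) \<le> wat u (std_map ?Uc j)"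
        using False jU t i j by blast
      then show ?thesis using False jU i j by (simp add: wat_merge_word)
    qed
  qed
  then show ?thesis
    unfolding Tpartitions_def tdeg_topology[OF T] using set_merge_word by (auto simp: packed_def)
qed

lemma wmax_merge_word: "wmax (merge_word n U u v) = wmax u + wmax v"
  by (rule wmax_eqI[OF set_merge_word])

lemma upper_set_merge_word: "{i \<in> {1..n}. wmax u < wat (merge_word n U u v) i} = U"
  using merge_word_cases U_subset by fastforce

lemma wq_cut_merge_word: "wq_cut (merge_word n U u v) (wmax u) = (u, v)"
proof -
  let ?m = "merge_word n U u v" and ?Uc = "{1..n} - U"
  have small: "{i \<in> {1..length ?m}. wat ?m i \<in> {1..wmax u}} = ?Uc"
    and large: "{i \<in> {1..length ?m}. wat ?m i \<notin> {1..wmax u}} = U"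
    using merge_word_cases U_subset by fastforce+
  note fw_small = filter_wat[of "\<lambda>x. x \<in> {1..wmax u}" ?m, unfolded small]
  note fw_large = filter_wat[of "\<lambda>x. x \<notin> {1..wmax u}" ?m, unfolded large]
  have "filter (\<lambda>x. x \<in> {1..wmax u}) ?m = u"
  proof (rule list_eq_iff_wat)
    fix a assume "a \<in> {1..length (filter (\<lambda>x. x \<in> {1..wmax u}) ?m)}"
    then have "a \<in> std_map ?Uc ` ?Uc"
      using fw_small std_map_image[of ?Uc] by simp
    then obtain i where "i \<in> ?Uc" "a = std_map ?Uc i"
      by blast
    then show "wat (filter (\<lambda>x. x \<in> {1..wmax u}) ?m) a = wat u a"
      using fw_small by (simp add: wat_merge_word)
  qed (use fw_small facts_u in simp)
  moreover have "filter (\<lambda>x. x \<notin> {1..wmax u}) ?m = map (\<lambda>x. x + wmax u) v"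
  proof (rule list_eq_iff_wat)
    fix a assume "a \<in> {1..length (filter (\<lambda>x. x \<notin> {1..wmax u}) ?m)}"
    then have "a \<in> std_map U ` U" "a - 1 < length v"
      using fw_large std_map_image[OF finite_U] facts_v(2) by auto
    then obtain i where i: "i \<in> U" "a = std_map U i" and "a - 1 < length v"
      by blast
    then have "wat (map (\<lambda>x. x + wmax u) v) a = wat v a + wmax u"
      by (simp add: wat_def)
    moreover have "i \<in> {1..n}"
      using i U_subset by blast
    ultimately show "wat (filter (\<lambda>x. x \<notin> {1..wmax u}) ?m) a = wat (map (\<lambda>x. x + wmax u) v) a"
      using fw_large i by (simp add: wat_merge_word)
  qed (use fw_large facts_v in simp)
  ultimately show ?thesis
    by (simp add: wq_cut_def pack_map_add pack_packed[OF facts_v(1)])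
qed

lemma weight_merge_word:
  "weight q1 q2 q3 (tleq T) (wat (merge_word n U u v)) {1..tdeg T} =
     weight q1 q2 q3 (tleq (induced T ({1..n} - U))) (wat u) {1..tdeg (induced T ({1..n} - U))} *
     weight q1 q2 q3 (tleq (induced T U)) (wat v) {1..tdeg (induced T U)}"
proof -
  let ?m = "merge_word n U u v" and ?Uc = "{1..n} - U"
  have "{1..tdeg T} = ?Uc \<union> U"
    using U_subset tdeg_topology[OF T] by auto
  moreover have "weight q1 q2 q3 (tleq T) (wat ?m) (?Uc \<union> U) =
      weight q1 q2 q3 (tleq T) (wat ?m) ?Uc * weight q1 q2 q3 (tleq T) (wat ?m) U"
  proof (rule weight_Un)
    fix a b assume "a \<in> ?Uc" "b \<in> U" "wat ?m a = wat ?m b"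
    then show "\<not> tleq T a b \<and> \<not> tleq T b a \<and> a < b"
      using merge_word_cases[of a] merge_word_cases[of b] U_subset by auto
  qed (use finite_U in auto)
  moreover have "weight q1 q2 q3 (tleq (induced T ?Uc)) (wat u) {1..tdeg (induced T ?Uc)} =
      weight q1 q2 q3 (tleq T) (wat ?m) ?Uc"
    by (rule weight_induced) (auto simp: wat_merge_word)
  moreover have "weight q1 q2 q3 (tleq (induced T U)) (wat v) {1..tdeg (induced T U)} =
      weight q1 q2 q3 (tleq T) (wat ?m) U"
  proof (rule weight_induced[OF U_subset])
    fix a b assume "a \<in> U" "b \<in> U"
    then have "a \<in> {1..n}" "b \<in> {1..n}"
      using U_subset by blast+
    with \<open>a \<in> U\<close> \<open>b \<in> U\<close> show "wat v (std_map U a) = wat v (std_map U b) \<longleftrightarrow> wat ?m a = wat ?m b"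
      by (simp add: wat_merge_word)
  qed
  ultimately show ?thesis
    by simp
qed

end

context
  fixes f :: "nat list" and k :: nat
  assumes f: "f \<in> Tpartitions T" and k: "k \<le> wmax f"
begin

private lemma facts_f: "packed f" "length f = n"
  using f TpartitionsD tdeg_topology[OF T] by auto

private lemma bounds_f: "i \<in> {1..n} \<Longrightarrow> 1 \<le> wat f i \<and> wat f i \<le> wmax f"
  using packed_wat_bounds[OF facts_f(1)] facts_f(2) by simp

private lemma mono_f: "i \<in> {1..n} \<Longrightarrow> j \<in> {1..n} \<Longrightarrow> tleq T i j \<Longrightarrow> wat f i \<le> wat f j"
  using Tpartitions_mono[OF f] tdeg_topology[OF T] by simp

lemma upper_set_open: "{i \<in> {1..n}. k < wat f i} \<in> T"
  using mono_f by (intro up_closed_open[OF T]) fastforce+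

private lemma positions_lower: "{i \<in> {1..length f}. wat f i \<in> {1..k}} = {1..n} - {i \<in> {1..n}. k < wat f i}"
  using bounds_f facts_f(2) by fastforce

private lemma positions_upper: "{i \<in> {1..length f}. wat f i \<notin> {1..k}} = {i \<in> {1..n}. k < wat f i}"
  using bounds_f facts_f(2) by fastforce

private lemma filter_lower:
  "length (fst (wq_cut f k)) = card ({1..n} - {i \<in> {1..n}. k < wat f i})"
  "\<And>i. i \<in> {1..n} - {i \<in> {1..n}. k < wat f i} \<Longrightarrow>
     wat (fst (wq_cut f k)) (std_map ({1..n} - {i \<in> {1..n}. k < wat f i}) i) = wat f i"
  using filter_wat[of "\<lambda>x. x \<in> {1..k}" f, unfolded positions_lower] by (auto simp: wq_cut_def)

private lemma filter_upper:
  "length (filter (\<lambda>x. x \<notin> {1..k}) f) = card {i \<in> {1..n}. k < wat f i}"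
  "\<And>i. i \<in> {i \<in> {1..n}. k < wat f i} \<Longrightarrow>
     wat (filter (\<lambda>x. x \<notin> {1..k}) f) (std_map {i \<in> {1..n}. k < wat f i} i) = wat f i"
  using filter_wat[of "\<lambda>x. x \<notin> {1..k}" f, unfolded positions_upper] by auto

lemma set_fst_wq_cut: "set (fst (wq_cut f k)) = {1..k}"
  using set_packed[OF facts_f(1)] k by (auto simp: wq_cut_def)

private lemma wat_snd_wq_cut:
  assumes i: "i \<in> {i \<in> {1..n}. k < wat f i}"
  shows "wat (snd (wq_cut f k)) (std_map {i \<in> {1..n}. k < wat f i} i) = wat f i - k"
proof -
  let ?U = "{i \<in> {1..n}. k < wat f i}"
  have "set (filter (\<lambda>x. x \<notin> {1..k}) f) = {Suc k..wmax f}"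
    using set_packed[OF facts_f(1)] k by auto
  moreover have "std_map ?U i \<in> {1..length (filter (\<lambda>x. x \<notin> {1..k}) f)}"
    using std_map_in_range[of ?U i] i filter_upper(1) by simp
  ultimately have "wat (snd (wq_cut f k)) (std_map ?U i) = std_map {Suc k..wmax f} (wat f i)"
    using i filter_upper(2) by (simp add: wq_cut_def wat_pack)
  also have "\<dots> = wat f i - k"
    using i bounds_f by (intro std_map_atLeastAtMost) auto
  finally show ?thesis .
qed

lemma wq_cut_in_Tpartitions:
  "fst (wq_cut f k) \<in> Tpartitions (induced T ({1..n} - {i \<in> {1..n}. k < wat f i}))"
  "snd (wq_cut f k) \<in> Tpartitions (induced T {i \<in> {1..n}. k < wat f i})"
proof -
  show "fst (wq_cut f k) \<in> Tpartitions (induced T ({1..n} - {i \<in> {1..n}. k < wat f i}))"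
    unfolding Tpartitions_induced_iff[OF Diff_subset filter_lower(1)]
    using set_fst_wq_cut mono_f filter_lower(2) by (auto simp: packed_def)
  have "length (snd (wq_cut f k)) = card {i \<in> {1..n}. k < wat f i}"
    using filter_upper(1) by (simp add: wq_cut_def)
  moreover have "packed (snd (wq_cut f k))"
    by (simp add: wq_cut_def packed_pack)
  moreover have "\<forall>i\<in>{i \<in> {1..n}. k < wat f i}. \<forall>j\<in>{i \<in> {1..n}. k < wat f i}. tleq T i j \<longrightarrow>
      wat (snd (wq_cut f k)) (std_map {i \<in> {1..n}. k < wat f i} i) \<le>
      wat (snd (wq_cut f k)) (std_map {i \<in> {1..n}. k < wat f i} j)"
    using mono_f wat_snd_wq_cut by (auto intro: diff_le_mono)
  ultimately show "snd (wq_cut f k) \<in> Tpartitions (induced T {i \<in> {1..n}. k < wat f i})"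
    by (subst Tpartitions_induced_iff) auto
qed

lemma merge_word_wq_cut:
  "merge_word n {i \<in> {1..n}. k < wat f i} (fst (wq_cut f k)) (snd (wq_cut f k)) = f"
proof (rule list_eq_iff_wat)
  fix i assume "i \<in> {1..length (merge_word n {i \<in> {1..n}. k < wat f i} (fst (wq_cut f k)) (snd (wq_cut f k)))}"
  then have i: "i \<in> {1..n}" by simp
  then show "wat (merge_word n {i \<in> {1..n}. k < wat f i} (fst (wq_cut f k)) (snd (wq_cut f k))) i = wat f i"
    using wat_snd_wq_cut filter_lower(2) wmax_eqI[OF set_fst_wq_cut] by (simp add: wat_merge_word)
qed (simp add: facts_f)

end

lemma wq_delta_eq: "wq_delta f = (\<Sum>k\<in>{0..wmax f}. Poly_Mapping.single (wq_cut f k) 1)"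
  by (simp add: wq_delta_def wq_cut_def)

lemma lookup_WQ_delta_gamma_basis:
  "Poly_Mapping.lookup (WQ_delta (gamma_basis q1 q2 q3 T)) p =
     (\<Sum>x\<in>{(f, k). f \<in> Tpartitions T \<and> k \<le> wmax f \<and> wq_cut f k = p}.
        weight q1 q2 q3 (tleq T) (wat (fst x)) {1..tdeg T})"
proof -
  let ?w = "\<lambda>f. weight q1 q2 q3 (tleq T) (wat f) {1..tdeg T}"
  have "Poly_Mapping.lookup (WQ_delta (gamma_basis q1 q2 q3 T)) p =
      (\<Sum>f\<in>Tpartitions T. ?w f * (\<Sum>k\<in>{0..wmax f}. if wq_cut f k = p then 1 else 0))"
    unfolding WQ_delta_def
    by (subst lookup_lin_ext_superset[OF finite_Tpartitions keys_gamma_basis], intro sum.cong refl)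
       (simp add: lookup_gamma_basis wq_delta_eq lookup_sum lookup_single when_def)
  also have "\<dots> = (\<Sum>(f, k)\<in>Sigma (Tpartitions T) (\<lambda>f. {0..wmax f}). if wq_cut f k = p then ?w f else 0)"
    by (subst sum.Sigma[symmetric]) (auto simp: finite_Tpartitions sum_distrib_left intro!: sum.cong)
  also have "\<dots> = (\<Sum>x\<in>{x \<in> Sigma (Tpartitions T) (\<lambda>f. {0..wmax f}). wq_cut (fst x) (snd x) = p}. ?w (fst x))"
    by (subst sum.inter_filter) (auto simp: finite_Tpartitions split_def)
  also have "{x \<in> Sigma (Tpartitions T) (\<lambda>f. {0..wmax f}). wq_cut (fst x) (snd x) = p} =
      {(f, k). f \<in> Tpartitions T \<and> k \<le> wmax f \<and> wq_cut f k = p}"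
    by auto
  finally show ?thesis .
qed

text \<open>Cutting a partition at a level \<open>k\<close> and merging along an open set are inverse bijections
  between the pairs \<open>(f, k)\<close> with \<open>wq_cut f k = (u, v)\<close> and the open sets \<open>U\<close> such that \<open>u\<close> and
  \<open>v\<close> are partitions of the induced topologies on the complement of \<open>U\<close> and on \<open>U\<close>.\<close>

lemma sum_wq_cut_eq_sum_opens:
  "(\<Sum>x\<in>{(f, k). f \<in> Tpartitions T \<and> k \<le> wmax f \<and> wq_cut f k = (u, v)}.
      weight q1 q2 q3 (tleq T) (wat (fst x)) {1..tdeg T}) =
   (\<Sum>U\<in>{U \<in> T. u \<in> Tpartitions (induced T ({1..n} - U)) \<and> v \<in> Tpartitions (induced T U)}.
      weight q1 q2 q3 (tleq (induced T ({1..n} - U))) (wat u) {1..tdeg (induced T ({1..n} - U))} *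
      weight q1 q2 q3 (tleq (induced T U)) (wat v) {1..tdeg (induced T U)})"
proof (rule sum.reindex_bij_witness[where j = "\<lambda>(f, k). {i \<in> {1..n}. k < wat f i}"
      and i = "\<lambda>U. (merge_word n U u v, wmax u)"])
  fix x assume "x \<in> {(f, k). f \<in> Tpartitions T \<and> k \<le> wmax f \<and> wq_cut f k = (u, v)}"
  then obtain f k where x: "x = (f, k)" and f: "f \<in> Tpartitions T" and k: "k \<le> wmax f"
    and cut: "wq_cut f k = (u, v)"
    by auto
  have u: "u = fst (wq_cut f k)" and v: "v = snd (wq_cut f k)"
    using cut by simp_all
  show "(\<lambda>U. (merge_word n U u v, wmax u)) ((\<lambda>(f, k). {i \<in> {1..n}. k < wat f i}) x) = x"
    using merge_word_wq_cut[OF f k] wmax_eqI[OF set_fst_wq_cut[OF f k]] by (simp add: x u v)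
  show "(\<lambda>(f, k). {i \<in> {1..n}. k < wat f i}) x \<in>
      {U \<in> T. u \<in> Tpartitions (induced T ({1..n} - U)) \<and> v \<in> Tpartitions (induced T U)}"
    using upper_set_open[OF f k] wq_cut_in_Tpartitions[OF f k] by (simp add: x u v)
  show "weight q1 q2 q3 (tleq (induced T ({1..n} - (\<lambda>(f, k). {i \<in> {1..n}. k < wat f i}) x))) (wat u)
        {1..tdeg (induced T ({1..n} - (\<lambda>(f, k). {i \<in> {1..n}. k < wat f i}) x))} *
      weight q1 q2 q3 (tleq (induced T ((\<lambda>(f, k). {i \<in> {1..n}. k < wat f i}) x))) (wat v)
        {1..tdeg (induced T ((\<lambda>(f, k). {i \<in> {1..n}. k < wat f i}) x))} =
      weight q1 q2 q3 (tleq T) (wat (fst x)) {1..tdeg T}"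
    using weight_merge_word[OF upper_set_open[OF f k] wq_cut_in_Tpartitions[OF f k], of q1 q2 q3]
      merge_word_wq_cut[OF f k] by (simp add: x u v)
next
  fix U assume "U \<in> {U \<in> T. u \<in> Tpartitions (induced T ({1..n} - U)) \<and> v \<in> Tpartitions (induced T U)}"
  then have U: "U \<in> T" and u: "u \<in> Tpartitions (induced T ({1..n} - U))" and v: "v \<in> Tpartitions (induced T U)"
    by auto
  show "(\<lambda>(f, k). {i \<in> {1..n}. k < wat f i}) ((\<lambda>U. (merge_word n U u v, wmax u)) U) = U"
    using upper_set_merge_word[OF U u v] by simp
  show "(\<lambda>U. (merge_word n U u v, wmax u)) U \<in> {(f, k). f \<in> Tpartitions T \<and> k \<le> wmax f \<and> wq_cut f k = (u, v)}"
    using merge_word_in_Tpartitions[OF U u v] wmax_merge_word[OF U u v] wq_cut_merge_word[OF U u v] by simp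
qed

lemma lookup_tensor_map_Gamma_topo_delta:
  "Poly_Mapping.lookup (tensor_map (Gamma q1 q2 q3) (Gamma q1 q2 q3) (topo_delta T)) (u, v) =
     (\<Sum>U\<in>T. Poly_Mapping.lookup (gamma_basis q1 q2 q3 (induced T ({1..n} - U))) u *
        Poly_Mapping.lookup (gamma_basis q1 q2 q3 (induced T U)) v)"
proof -
  have "tensor_map (Gamma q1 q2 q3) (Gamma q1 q2 q3) (topo_delta T) =
      (\<Sum>U\<in>T. tensor_map (Gamma q1 q2 q3) (Gamma q1 q2 q3) (Poly_Mapping.single (induced T ({1..n} - U), induced T U) 1))"
    unfolding topo_delta_def tdeg_topology[OF T] restr_def[symmetric]
    by (simp add: tensor_map_def[of "Gamma q1 q2 q3" "Gamma q1 q2 q3"] lin_ext_sum)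
  then show ?thesis
    by (simp add: lookup_sum lookup_tensor_map_single Gamma_single)
qed

lemma WQ_delta_gamma_basis:
  "WQ_delta (gamma_basis q1 q2 q3 T) = tensor_map (Gamma q1 q2 q3) (Gamma q1 q2 q3) (topo_delta T)"
proof (rule poly_mapping_eqI)
  fix p :: "nat list \<times> nat list"
  obtain u v where p: "p = (u, v)" by (cases p)
  have "(\<Sum>U\<in>{U \<in> T. u \<in> Tpartitions (induced T ({1..n} - U)) \<and> v \<in> Tpartitions (induced T U)}.
      weight q1 q2 q3 (tleq (induced T ({1..n} - U))) (wat u) {1..tdeg (induced T ({1..n} - U))} *
      weight q1 q2 q3 (tleq (induced T U)) (wat v) {1..tdeg (induced T U)}) =
    (\<Sum>U\<in>T. Poly_Mapping.lookup (gamma_basis q1 q2 q3 (induced T ({1..n} - U))) u *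
        Poly_Mapping.lookup (gamma_basis q1 q2 q3 (induced T U)) v)"
    by (subst sum.inter_filter[OF finite_topology[OF T]]) (intro sum.cong refl, simp add: lookup_gamma_basis)
  then show "Poly_Mapping.lookup (WQ_delta (gamma_basis q1 q2 q3 T)) p =
      Poly_Mapping.lookup (tensor_map (Gamma q1 q2 q3) (Gamma q1 q2 q3) (topo_delta T)) p"
    unfolding p lookup_WQ_delta_gamma_basis sum_wq_cut_eq_sum_opens lookup_tensor_map_Gamma_topo_delta .
qed

end

lemma Gamma_comult:
  assumes "Poly_Mapping.keys x \<subseteq> all_topologies"
  shows "WQ_delta (Gamma q1 q2 q3 x) = tensor_map (Gamma q1 q2 q3) (Gamma q1 q2 q3) (HT_delta x)"
proof -
  have "WQ_delta (Gamma q1 q2 q3 x) = lin_ext (\<lambda>T. WQ_delta (gamma_basis q1 q2 q3 T)) x"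
    unfolding WQ_delta_def Gamma_def lin_ext_lin_ext ..
  also have "\<dots> = lin_ext (\<lambda>T. tensor_map (Gamma q1 q2 q3) (Gamma q1 q2 q3) (topo_delta T)) x"
    using assms by (intro lin_ext_cong) (auto simp: all_topologies_def intro: WQ_delta_gamma_basis)
  also have "\<dots> = tensor_map (Gamma q1 q2 q3) (Gamma q1 q2 q3) (HT_delta x)"
    unfolding HT_delta_def tensor_map_def[of "Gamma q1 q2 q3" "Gamma q1 q2 q3"] lin_ext_lin_ext ..
  finally show ?thesis .
qed

section \<open>\<open>\<Gamma>\<^sub>q\<close> is surjective\<close>

lemma card_image_le_card_image:
  assumes "finite J" "\<And>a b. a \<in> J \<Longrightarrow> b \<in> J \<Longrightarrow> F a = F b \<Longrightarrow> G a = G b"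
  shows "card (G ` J) \<le> card (F ` J)"
proof -
  have "G ` J = (\<lambda>y. G (inv_into J F y)) ` (F ` J)"
    unfolding image_image
  proof (rule image_cong[OF refl])
    fix a assume "a \<in> J"
    then have "inv_into J F (F a) \<in> J" "F (inv_into J F (F a)) = F a"
      by (auto intro: inv_into_into f_inv_into_f)
    with \<open>a \<in> J\<close> show "G a = G (inv_into J F (F a))"
      using assms(2) by metis
  qed
  then show ?thesis
    using assms(1) by (simp add: card_image_le)
qed

definition level_topology :: "nat list \<Rightarrow> nat set set" where
  "level_topology w = (\<lambda>k. {i \<in> {1..length w}. k < wat w i}) ` {0..wmax w}"

context
  fixes w :: "nat list"
  assumes w: "packed w"
begin

private lemma bounds_w: "i \<in> {1..length w} \<Longrightarrow> 1 \<le> wat w i \<and> wat w i \<le> wmax w"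
  using packed_wat_bounds[OF w] by simp

lemma level_topology_in_topologies: "level_topology w \<in> topologies (length w)"
  unfolding topologies_def is_topology_def mem_Collect_eq
proof (intro conjI ballI)
  show "level_topology w \<subseteq> Pow {1..length w}"
    by (auto simp: level_topology_def)
  have "{i \<in> {1..length w}. wmax w < wat w i} = {}"
    using bounds_w by fastforce
  then show "{} \<in> level_topology w"
    unfolding level_topology_def by (intro image_eqI[of _ _ "wmax w"]) auto
  have "{i \<in> {1..length w}. 0 < wat w i} = {1..length w}"
    using bounds_w by fastforce
  then show "{1..length w} \<in> level_topology w"
    unfolding level_topology_def by (intro image_eqI[of _ _ 0]) auto
next
  fix A B assume "A \<in> level_topology w" "B \<in> level_topology w"
  then obtain a b where "a \<in> {0..wmax w}" "A = {i \<in> {1..length w}. a < wat w i}"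
    "b \<in> {0..wmax w}" "B = {i \<in> {1..length w}. b < wat w i}"
    by (auto simp: level_topology_def)
  then have "A \<union> B = {i \<in> {1..length w}. min a b < wat w i}" "min a b \<in> {0..wmax w}"
    and "A \<inter> B = {i \<in> {1..length w}. max a b < wat w i}" "max a b \<in> {0..wmax w}"
    by auto
  then show "A \<union> B \<in> level_topology w" "A \<inter> B \<in> level_topology w"
    unfolding level_topology_def by (blast intro: image_eqI)+
qed

lemma tdeg_level_topology: "tdeg (level_topology w) = length w"
  by (rule tdeg_topology[OF level_topology_in_topologies])

lemma tleq_level_topology:
  assumes "i \<in> {1..length w}" "j \<in> {1..length w}"
  shows "tleq (level_topology w) i j \<longleftrightarrow> wat w i \<le> wat w j"
proof
  assume "tleq (level_topology w) i j"
  moreover have "{l \<in> {1..length w}. wat w j < wat w l} \<in> level_topology w"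
    using bounds_w[OF assms(2)] unfolding level_topology_def by auto
  ultimately show "wat w i \<le> wat w j"
    using assms unfolding tleq_def by (metis (no_types, lifting) mem_Collect_eq not_le order_less_irrefl)
next
  assume "wat w i \<le> wat w j"
  then show "tleq (level_topology w) i j"
    using assms unfolding tleq_def level_topology_def by auto
qed

lemma in_Tpartitions_level_topology: "w \<in> Tpartitions (level_topology w)"
  unfolding Tpartitions_def tdeg_level_topology using w tleq_level_topology by auto

lemma weight_level_topology:
  "weight q1 q2 q3 (tleq (level_topology w)) (wat w) {1..tdeg (level_topology w)} = 1"
  by (rule weight_eq_1) (simp add: tdeg_level_topology tleq_level_topology)

text \<open>Every other partition of the level topology of \<open>w\<close> lies letterwise below \<open>w\<close>, as it can
  only merge letters of \<open>w\<close>: this makes \<open>\<Gamma>\<^sub>q\<close> unitriangular.\<close>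

lemma Tpartitions_level_topology_le:
  assumes g: "g \<in> Tpartitions (level_topology w)" and i: "i \<in> {1..length w}"
  shows "wat g i \<le> wat w i"
proof -
  have pg: "packed g" and lg: "length g = length w"
    using g TpartitionsD tdeg_level_topology by auto
  have mono: "wat g a \<le> wat g b" if "a \<in> {1..length w}" "b \<in> {1..length w}" "wat w a \<le> wat w b" for a b
    using g that tleq_level_topology Tpartitions_mono tdeg_level_topology by metis
  define J where "J = {j \<in> {1..length w}. wat g j < wat g i}"
  have "wat g i - 1 \<le> card (wat g ` J)"
  proof -
    have "{1..wat g i - 1} \<subseteq> wat g ` J"
    proof
      fix a assume a: "a \<in> {1..wat g i - 1}"
      then have "a \<in> set g"
        using packed_wat_bounds[OF pg, of i] i lg set_packed[OF pg] by auto
      then show "a \<in> wat g ` J"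
        using a lg set_eq_wat_image[of g] unfolding J_def by force
    qed
    moreover have "finite J"
      by (simp add: J_def)
    ultimately show ?thesis
      using card_mono[of "wat g ` J" "{1..wat g i - 1}"] by simp
  qed
  also have "card (wat g ` J) \<le> card (wat w ` J)"
    using mono by (intro card_image_le_card_image) (auto simp: J_def intro: order_antisym)
  also have "card (wat w ` J) \<le> wat w i - 1"
  proof -
    have "wat w ` J \<subseteq> {1..wat w i - 1}"
      using mono[OF i] bounds_w by (fastforce simp: J_def)
    then show ?thesis
      using card_mono[of "{1..wat w i - 1}" "wat w ` J"] by simp
  qed
  finally show ?thesis
    using packed_wat_bounds[OF pg, of i] bounds_w[OF i] i lg by linarith
qed

lemma sum_list_Tpartitions_level_topology_less:
  assumes g: "g \<in> Tpartitions (level_topology w)" and "g \<noteq> w"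
  shows "sum_list g < sum_list w"
proof -
  have lg: "length g = length w"
    using g TpartitionsD tdeg_level_topology by auto
  then obtain i where i: "i \<in> {1..length w}" "wat g i \<noteq> wat w i"
    using list_eq_iff_wat[of g w] \<open>g \<noteq> w\<close> by auto
  have "(\<Sum>p<length w. wat g (Suc p)) < (\<Sum>p<length w. wat w (Suc p))"
  proof (rule sum_strict_mono_ex1)
    show "\<forall>p\<in>{..<length w}. wat g (Suc p) \<le> wat w (Suc p)"
      using Tpartitions_level_topology_le[OF g] by simp
    show "\<exists>p\<in>{..<length w}. wat g (Suc p) < wat w (Suc p)"
      using i Tpartitions_level_topology_le[OF g i(1)] by (intro bexI[of _ "i - 1"]) auto
  qed simp
  then show ?thesis
    using lg by (simp add: sum_list_sum_nth atLeast0LessThan wat_def)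
qed

end

lemma Gamma_hits_single:
  "packed w \<Longrightarrow> \<exists>x. Poly_Mapping.keys x \<subseteq> all_topologies \<and> Gamma q1 q2 q3 x = Poly_Mapping.single w 1"
proof (induction "sum_list w" arbitrary: w rule: less_induct)
  case less
  let ?T = "level_topology w"
  let ?A = "Tpartitions ?T - {w}" and ?c = "\<lambda>g. weight q1 q2 q3 (tleq ?T) (wat g) {1..tdeg ?T}"
  have "\<exists>x. Poly_Mapping.keys x \<subseteq> all_topologies \<and> Gamma q1 q2 q3 x = Poly_Mapping.single g 1"
    if "g \<in> ?A" for g
    using that less sum_list_Tpartitions_level_topology_less[OF less.prems] TpartitionsD by blast
  then obtain X where X: "\<And>g. g \<in> ?A \<Longrightarrow>
      Poly_Mapping.keys (X g) \<subseteq> all_topologies \<and> Gamma q1 q2 q3 (X g) = Poly_Mapping.single g 1"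
    by metis
  define x where "x = Poly_Mapping.single ?T 1 - (\<Sum>g\<in>?A. pm_smult (?c g) (X g))"
  have "?T \<in> all_topologies"
    using level_topology_in_topologies[OF less.prems] by (auto simp: all_topologies_def)
  moreover have "Poly_Mapping.keys (\<Sum>g\<in>?A. pm_smult (?c g) (X g)) \<subseteq> all_topologies"
    using keys_sum X keys_pm_smult by fastforce
  ultimately have "Poly_Mapping.keys x \<subseteq> all_topologies"
    unfolding x_def using keys_diff by fastforce
  moreover have "gamma_basis q1 q2 q3 ?T = Poly_Mapping.single w (?c w) + (\<Sum>g\<in>?A. Poly_Mapping.single g (?c g))"
    unfolding gamma_basis_eq
    using in_Tpartitions_level_topology[OF less.prems] by (simp add: sum.remove finite_Tpartitions)
  then have "gamma_basis q1 q2 q3 ?T = Poly_Mapping.single w 1 + (\<Sum>g\<in>?A. Poly_Mapping.single g (?c g))"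
    unfolding weight_level_topology[OF less.prems] .
  then have "Gamma q1 q2 q3 x = Poly_Mapping.single w 1"
    unfolding x_def Gamma_def lin_ext_diff lin_ext_sum lin_ext_pm_smult
    using X by (simp add: Gamma_def[symmetric] Gamma_single pm_smult_single)
  ultimately show ?case
    by blast
qed

lemma Gamma_surj:
  assumes y: "Poly_Mapping.keys y \<subseteq> {w. packed w}"
  shows "\<exists>x. Poly_Mapping.keys x \<subseteq> all_topologies \<and> Gamma q1 q2 q3 x = y"
proof -
  obtain X where X: "\<And>w. w \<in> Poly_Mapping.keys y \<Longrightarrow>
      Poly_Mapping.keys (X w) \<subseteq> all_topologies \<and> Gamma q1 q2 q3 (X w) = Poly_Mapping.single w 1"
    using y Gamma_hits_single by (metis mem_Collect_eq subsetD)
  define x where "x = (\<Sum>w\<in>Poly_Mapping.keys y. pm_smult (Poly_Mapping.lookup y w) (X w))"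
  have "Poly_Mapping.keys x \<subseteq> all_topologies"
    unfolding x_def using keys_sum X keys_pm_smult by fastforce
  moreover have "Gamma q1 q2 q3 x = (\<Sum>w\<in>Poly_Mapping.keys y. Poly_Mapping.single w (Poly_Mapping.lookup y w))"
    unfolding x_def Gamma_def lin_ext_sum lin_ext_pm_smult
    using X by (intro sum.cong refl) (simp add: Gamma_def[symmetric] pm_smult_single)
  moreover have "\<dots> = y"
    by (rule poly_mapping_eqI) (simp add: lookup_sum lookup_single when_def in_keys_iff)
  ultimately show ?thesis
    by auto
qed

theorem proposition14:
  fixes q1 q2 q3 :: "'k::field"
  shows
    "(\<forall>x::nat set set \<Rightarrow>\<^sub>0 'k. Poly_Mapping.keys x \<subseteq> all_topologies \<longrightarrow> Poly_Mapping.keys (Gamma q1 q2 q3 x) \<subseteq> {w. packed w})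
   \<and> (\<forall>n. \<forall>x::nat set set \<Rightarrow>\<^sub>0 'k. Poly_Mapping.keys x \<subseteq> topologies n \<longrightarrow>
          Poly_Mapping.keys (Gamma q1 q2 q3 x) \<subseteq> {w. packed w \<and> length w = n})
   \<and> Gamma q1 q2 q3 HT_unit = WQ_unit
   \<and> (\<forall>x y. Poly_Mapping.keys x \<subseteq> all_topologies \<longrightarrow> Poly_Mapping.keys y \<subseteq> all_topologies \<longrightarrow>
          Gamma q1 q2 q3 (HT_mult x y) = WQ_mult (Gamma q1 q2 q3 x) (Gamma q1 q2 q3 y))
   \<and> (\<forall>x. Poly_Mapping.keys x \<subseteq> all_topologies \<longrightarrow>
          WQ_delta (Gamma q1 q2 q3 x) = tensor_map (Gamma q1 q2 q3) (Gamma q1 q2 q3) (HT_delta x))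
   \<and> (\<forall>x. Poly_Mapping.keys x \<subseteq> all_topologies \<longrightarrow> WQ_counit (Gamma q1 q2 q3 x) = HT_counit x)
   \<and> (\<forall>y. Poly_Mapping.keys y \<subseteq> {w. packed w} \<longrightarrow> (\<exists>x. Poly_Mapping.keys x \<subseteq> all_topologies \<and> Gamma q1 q2 q3 x = y))
   \<and> (\<forall>x. Poly_Mapping.keys x \<subseteq> all_topologies \<longrightarrow>
          WQ_j (Gamma q2 q1 q3 x) = Gamma q1 q2 q3 (HT_iota x))"
  by (simp add: keys_Gamma_packed keys_Gamma_homogeneous Gamma_unit Gamma_mult Gamma_comult Gamma_counit
      Gamma_surj Gamma_topo_iota)

end
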